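(* Let $(\varphi_\alpha)_{\alpha>0}$ be a non-linear regularizing filter satisfying Assumption A, and let $\mathcal{R}$ be the functional $\mathcal{R}((x_\lambda))=\sum_\lambda s_\lambda(\kappa_\lambda x_\lambda)$, where $s_\lambda$ are proper, convex, lower semi-continuous with $s_\lambda(0)=0$ and $\varphi_\alpha(\kappa_\lambda,\cdot)=\operatorname{prox}_{\alpha s_\lambda}$ for all $\alpha>0$. Let $\alpha>0$ and $z,z^k\in\ell^2(\Lambda)$ with $z^k\to z$, and set $c_\alpha:=\mathbf{M}_\kappa^+\circ\Phi_{\alpha,\kappa}(z)$. Then: (Existence) $\operatorname{dom}(\mathbf{M}_\kappa^+\circ\Phi_{\alpha,\kappa})=\ell^2(\Lambda)$. (Stability) With $c^k:=\mathbf{M}_\kappa^+\circ\Phi_{\alpha,\kappa}(z^k)$ we have $c^k\rightharpoonup c_\alpha$ weakly and $\mathcal{R}(c^k)\to\mathcal{R}(c_\alpha)$ as $k\to\infty$. (Weak convergence) Suppose $z=\mathbf{M}_\kappa c^+$ for some $c^+\in\ell^2(\Lambda)$ and $z\in\operatorname{ran}(\Phi_{\tilde\alpha,\kappa})$ for some $\tilde\alpha>0$. Let $\delta_k\to0$ with $\|z^k-z\|\le\delta_k$, and let $\alpha_k\to0$ with $\delta_k^2/\alpha_k\to0$. Then $c^k:=\mathbf{M}_\kappa^+\circ\Phi_{\alpha_k,\kappa}(z^k)$ satisfies $c^k\rightharpoonup c^+$ weakly and $\mathcal{R}(c^k)\to\mathcal{R}(c^+)$ as $k\to\infty$.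
   Context: $\Lambda$ is an at most countable index set and $\kappa=(\kappa_\lambda)_{\lambda\in\Lambda}\in(0,\infty)^\Lambda$ with $\sup_\lambda\kappa_\lambda<\infty$. $\mathbf{M}_\kappa\colon\ell^2(\Lambda)\to\ell^2(\Lambda)$, $(x_\lambda)\mapsto(\kappa_\lambda x_\lambda)$; $\mathbf{M}_\kappa^+$ is its Moore–Penrose inverse, with domain $\{(c_\lambda)\in\ell^2:(c_\lambda/\kappa_\lambda)\in\ell^2\}$ and $\mathbf{M}_\kappa^+((c_\lambda))=(c_\lambda/\kappa_\lambda)$. A non-linear regularizing filter is a family $(\varphi_\alpha)_{\alpha>0}$ of functions $\varphi_\alpha\colon(0,\infty)\times\mathbb{R}\to\mathbb{R}$ such that for all $\alpha,\kappa>0$: (F1) $\varphi_\alpha(\kappa,\cdot)$ is non-decreasing; (F2) $\varphi_\alpha(\kappa,\cdot)$ is 1-Lipschitz; (F3) $\varphi_\alpha(\kappa,0)=0$; (F4) $\lim_{\alpha\to0}\varphi_\alpha(\kappa,c)=c$ for all $c\in\mathbb{R}$. $\Phi_{\alpha,\kappa}((c_\lambda))=(\varphi_\alpha(\kappa_\lambda,c_\lambda))_\lambda$ on $\ell^2(\Lambda)$; $\operatorname{dom}(\mathbf{M}_\kappa^+\circ\Phi_{\alpha,\kappa})=\{z:\Phi_{\alpha,\kappa}(z)\in\operatorname{dom}(\mathbf{M}_\kappa^+)\}$. Assumption A: (A1) for all $\kappa>0$ and $y\in\mathbb{R}$, the set $\{(w-y)/\alpha:\varphi_\alpha(\kappa,w)=y\}$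 does not depend on $\alpha>0$; (A2) for some $\tilde\alpha>0$ there exist $b,c>0$ such that for all $\kappa>0$ and $x\in\mathbb{R}$: $|x|\le\min\big(\varphi_{\tilde\alpha}(\kappa,\cdot)^{-1}(c\kappa)\big)\Rightarrow|\varphi_{\tilde\alpha}(\kappa,x)|\le\frac{\kappa^2}{\kappa^2+\tilde\alpha b}|x|$. $\operatorname{prox}_f(x)=\operatorname{argmin}_y\tfrac12|x-y|^2+f(y)$. *)

theory Defs
  imports "HOL-Analysis.Analysis"
begin

definition l2 :: "('i \<Rightarrow> real) set" where
  "l2 = {x. (\<lambda>i. (x i)\<^sup>2) summable_on UNIV}"

definition l2norm :: "('i \<Rightarrow> real) \<Rightarrow> real" where
  "l2norm x = sqrt (\<Sum>\<^sub>\<infinity>i. (x i)\<^sup>2)"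

definition weak_conv_l2 :: "(nat \<Rightarrow> 'i \<Rightarrow> real) \<Rightarrow> ('i \<Rightarrow> real) \<Rightarrow> bool" where
  "weak_conv_l2 X c \<longleftrightarrow> (\<forall>k. X k \<in> l2) \<and> c \<in> l2 \<and>
     (\<forall>y\<in>l2. (\<lambda>k. \<Sum>\<^sub>\<infinity>i. X k i * y i) \<longlonglongrightarrow> (\<Sum>\<^sub>\<infinity>i. c i * y i))"

definition Mk :: "('i \<Rightarrow> real) \<Rightarrow> ('i \<Rightarrow> real) \<Rightarrow> ('i \<Rightarrow> real)" where
  "Mk \<kappa> x = (\<lambda>i. \<kappa> i * x i)"

definition Mk_plus :: "('i \<Rightarrow> real) \<Rightarrow> ('i \<Rightarrow> real) \<Rightarrow> ('i \<Rightarrow> real)" where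
  "Mk_plus \<kappa> c = (\<lambda>i. c i / \<kappa> i)"

definition dom_Mk_plus :: "('i \<Rightarrow> real) \<Rightarrow> ('i \<Rightarrow> real) set" where
  "dom_Mk_plus \<kappa> = {c \<in> l2. (\<lambda>i. c i / \<kappa> i) \<in> l2}"

text \<open>A filter is phi :: alpha => kappa => c => value.\<close>
definition Phi :: "(real \<Rightarrow> real \<Rightarrow> real \<Rightarrow> real) \<Rightarrow> real \<Rightarrow> ('i \<Rightarrow> real) \<Rightarrow> ('i \<Rightarrow> real) \<Rightarrow> ('i \<Rightarrow> real)" where
  "Phi \<phi> \<alpha> \<kappa> c = (\<lambda>i. \<phi> \<alpha> (\<kappa> i) (c i))"

definition dom_MPhi :: "(real \<Rightarrow> real \<Rightarrow> real \<Rightarrow> real) \<Rightarrow> real \<Rightarrow> ('i \<Rightarrow> real) \<Rightarrow> ('i \<Rightarrow> real) set" where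
  "dom_MPhi \<phi> \<alpha> \<kappa> = {z \<in> l2. Phi \<phi> \<alpha> \<kappa> z \<in> dom_Mk_plus \<kappa>}"

definition nonlin_reg_filter :: "(real \<Rightarrow> real \<Rightarrow> real \<Rightarrow> real) \<Rightarrow> bool" where
  "nonlin_reg_filter \<phi> \<longleftrightarrow> (\<forall>\<alpha>>0. \<forall>k>0.
      mono (\<phi> \<alpha> k) \<and>
      (\<forall>x y. \<bar>\<phi> \<alpha> k x - \<phi> \<alpha> k y\<bar> \<le> \<bar>x - y\<bar>) \<and>
      \<phi> \<alpha> k 0 = 0) \<and>
    (\<forall>k>0. \<forall>c. ((\<lambda>\<alpha>. \<phi> \<alpha> k c) \<longlongrightarrow> c) (at_right 0))"

text \<open>Assumption A. In (A2), min of the preimage is read as the infimum in the extended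
  reals (Inf of the empty set = +infinity).\<close>
definition assumptionA :: "(real \<Rightarrow> real \<Rightarrow> real \<Rightarrow> real) \<Rightarrow> bool" where
  "assumptionA \<phi> \<longleftrightarrow>
    (\<forall>k>0. \<forall>y. \<forall>\<alpha>>0. \<forall>\<beta>>0.
        {(w - y) / \<alpha> | w. \<phi> \<alpha> k w = y} = {(w - y) / \<beta> | w. \<phi> \<beta> k w = y}) \<and>
    (\<exists>\<alpha>t>0. \<exists>b>0. \<exists>c>0. \<forall>k>0. \<forall>x.
        ereal \<bar>x\<bar> \<le> (INF w\<in>{w. \<phi> \<alpha>t k w = c * k}. ereal w) \<longrightarrow>
        \<bar>\<phi> \<alpha>t k x\<bar> \<le> k\<^sup>2 / (k\<^sup>2 + \<alpha>t * b) * \<bar>x\<bar>)"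

definition proper_fun :: "(real \<Rightarrow> ereal) \<Rightarrow> bool" where
  "proper_fun f \<longleftrightarrow> (\<forall>x. f x > -\<infinity>) \<and> (\<exists>x. f x < \<infinity>)"

definition convex_fun :: "(real \<Rightarrow> ereal) \<Rightarrow> bool" where
  "convex_fun f \<longleftrightarrow> (\<forall>x y t. 0 \<le> t \<and> t \<le> 1 \<longrightarrow>
      f (t * x + (1 - t) * y) \<le> ereal t * f x + ereal (1 - t) * f y)"

definition lsc_fun :: "(real \<Rightarrow> ereal) \<Rightarrow> bool" where
  "lsc_fun f \<longleftrightarrow> (\<forall>x X. X \<longlonglongrightarrow> x \<longrightarrow> f x \<le> liminf (\<lambda>n. f (X n)))"

definition prox :: "(real \<Rightarrow> ereal) \<Rightarrow> real \<Rightarrow> real" where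
  "prox f x = (THE y. \<forall>u. ereal ((x - y)\<^sup>2 / 2) + f y \<le> ereal ((x - u)\<^sup>2 / 2) + f u)"

definition Rfun :: "('i \<Rightarrow> real \<Rightarrow> ereal) \<Rightarrow> ('i \<Rightarrow> real) \<Rightarrow> ('i \<Rightarrow> real) \<Rightarrow> ereal" where
  "Rfun s \<kappa> x = (\<Sum>\<^sub>\<infinity>i. s i (\<kappa> i * x i))"

end

theory Submission
  imports Defs
begin

text \<open>
  Assumption (A1) transports the contraction that (A2) provides near zero from the
  parameter of (A2) to every \<open>\<alpha>\<close>; this bounds \<open>\<bar>\<phi> \<alpha> \<kappa>\<^sub>\<lambda> x / \<kappa>\<^sub>\<lambda>\<bar>\<close> by \<open>L \<bar>x\<bar> + M x\<^sup>2\<close> uniformly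
  in \<open>\<lambda>\<close>, so \<open>M\<^sub>\<kappa>\<^sup>+ \<circ> \<Phi>\<close> is defined on all of \<open>\<ell>\<^sup>2\<close> and maps bounded sets to bounded sets.

  Stability: bounded sequences that converge componentwise converge weakly, and
  \<open>R(c\<^sup>k) = \<Sum>\<^sub>\<lambda> s\<^sub>\<lambda>(\<phi> \<alpha> \<kappa>\<^sub>\<lambda> z\<^sup>k\<^sub>\<lambda>)\<close> converges because every term is continuous in the datum
  (lower semicontinuity of \<open>s\<^sub>\<lambda>\<close> plus minimality of the prox) and dominated by \<open>(z\<^sup>k\<^sub>\<lambda>)\<^sup>2 / (2\<alpha>)\<close>.

  Convergence: testing the prox at the noisy datum \<open>z\<^sup>k\<close> against the exact datum \<open>z\<close> gives
  \<open>R(c\<^sup>k) \<le> \<delta>\<^sub>k\<^sup>2 / (2\<alpha>\<^sub>k) + R(c\<^sup>+)\<close>; since \<open>z\<close> lies in the range of a filter, \<open>s\<^sub>\<lambda>(z\<^sub>\<lambda>)\<close> is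
  finite and summable.  Lower semicontinuity together with \<open>\<phi> \<alpha>\<^sub>k \<kappa>\<^sub>\<lambda> \<rightarrow> id\<close> gives the matching
  lower bound (Fatou).  Finally (A2) forces \<open>s\<^sub>\<lambda>(u)\<close> to grow at least like \<open>(u / \<kappa>\<^sub>\<lambda>)\<^sup>2\<close> near
  zero and linearly beyond, so bounded \<open>R(c\<^sup>k)\<close> bounds \<open>\<parallel>c\<^sup>k\<parallel>\<close>, and weak convergence again
  follows componentwise.
\<close>

section \<open>Proper convex lower semicontinuous functions and the proximal map\<close>

lemma lsc_fun_bounded_below_near:
  fixes g :: "real \<Rightarrow> ereal"
  assumes lsc: "lsc_fun g" and gx0: "g x0 = ereal v"
  shows "\<exists>r>0. \<forall>y. \<bar>y - x0\<bar> < r \<longrightarrow> ereal (v - 1) < g y"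
proof (rule ccontr)
  assume "\<not> ?thesis"
  then have "\<forall>n. \<exists>y. \<bar>y - x0\<bar> < inverse (real (Suc n)) \<and> g y \<le> ereal (v - 1)"
    by (metis not_less inverse_positive_iff_positive of_nat_0_less_iff zero_less_Suc)
  then obtain Y where Y: "\<And>n. \<bar>Y n - x0\<bar> < inverse (real (Suc n))" "\<And>n. g (Y n) \<le> ereal (v - 1)"
    by metis
  have "(\<lambda>n. \<bar>Y n - x0\<bar>) \<longlonglongrightarrow> 0"
    by (rule tendsto_sandwich[of "\<lambda>_. 0" _ _ "\<lambda>n. inverse (real (Suc n))"])
      (use Y(1) LIMSEQ_inverse_real_of_nat in \<open>auto intro!: always_eventually less_imp_le\<close>)
  then have "Y \<longlonglongrightarrow> x0" by (simp add: LIM_zero_iff tendsto_rabs_zero_iff)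
  then have "g x0 \<le> liminf (\<lambda>n. g (Y n))" using lsc unfolding lsc_fun_def by blast
  also have "\<dots> \<le> ereal (v - 1)" by (rule Liminf_le) (use Y(2) in auto)
  finally show False using gx0 by simp
qed

lemma convex_fun_lower_bound_from_ball:
  fixes g :: "real \<Rightarrow> ereal"
  assumes proper: "proper_fun g" and convex: "convex_fun g" and gx0: "g x0 = ereal v"
    and r: "r > 0" and near: "\<And>y. \<bar>y - x0\<bar> < r \<Longrightarrow> ereal (v - 1) < g y"
  shows "ereal (v - 1 - 2 / r * \<bar>y - x0\<bar>) \<le> g y"
proof (cases "\<bar>y - x0\<bar> < r")
  case True
  have "v - 1 - 2 / r * \<bar>y - x0\<bar> \<le> v - 1" using r by simp
  then show ?thesis using near[OF True] by (meson ereal_less_eq(3) less_imp_le order_trans)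
next
  case far: False
  show ?thesis
  proof (cases "g y")
    case (real w)
    define t where "t = r / (2 * \<bar>y - x0\<bar>)"
    have t: "0 < t" "t \<le> 1" "t * \<bar>y - x0\<bar> = r / 2" using far r by (auto simp: t_def field_simps)
    have "(t * y + (1 - t) * x0) - x0 = t * (y - x0)" by (simp add: algebra_simps)
    then have "\<bar>(t * y + (1 - t) * x0) - x0\<bar> = t * \<bar>y - x0\<bar>" using t(1) by (simp add: abs_mult)
    then have "ereal (v - 1) < g (t * y + (1 - t) * x0)" using near r t(3) by simp
    also have "\<dots> \<le> ereal t * g y + ereal (1 - t) * g x0"
      using convex t unfolding convex_fun_def by auto
    finally have "v - 1 < t * w + (1 - t) * v" by (simp add: real gx0)
    then have "v - 1 / t < w" using t(1) by (simp add: field_simps)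
    moreover have "1 / t = 2 / r * \<bar>y - x0\<bar>" using far r by (simp add: t_def)
    ultimately show ?thesis using real by simp
  qed (use proper in \<open>auto simp: proper_fun_def\<close>)
qed

lemma affine_minorant:
  fixes g :: "real \<Rightarrow> ereal"
  assumes proper: "proper_fun g" and convex: "convex_fun g" and lsc: "lsc_fun g"
  shows "\<exists>C D. D \<ge> 0 \<and> (\<forall>y. ereal (C - D * \<bar>y\<bar>) \<le> g y)"
proof -
  obtain x0 where "g x0 < \<infinity>" "g x0 > -\<infinity>" using proper unfolding proper_fun_def by blast
  then obtain v where gx0: "g x0 = ereal v" by (cases "g x0") auto
  obtain r where r: "r > 0" and near: "\<And>y. \<bar>y - x0\<bar> < r \<Longrightarrow> ereal (v - 1) < g y"
    using lsc_fun_bounded_below_near[OF lsc gx0] by blast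
  have "ereal (v - 1 - 2 / r * \<bar>x0\<bar> - 2 / r * \<bar>y\<bar>) \<le> g y" for y
  proof -
    have "2 / r * \<bar>y - x0\<bar> \<le> 2 / r * \<bar>y\<bar> + 2 / r * \<bar>x0\<bar>"
      using r abs_triangle_ineq4[of y x0] by (simp add: field_simps)
    then have "v - 1 - 2 / r * \<bar>x0\<bar> - 2 / r * \<bar>y\<bar> \<le> v - 1 - 2 / r * \<bar>y - x0\<bar>"
      by linarith
    then show ?thesis using convex_fun_lower_bound_from_ball[OF proper convex gx0 r near, of y]
      by (meson ereal_less_eq(3) order_trans)
  qed
  then show ?thesis using r by (intro exI[of _ "v - 1 - 2 / r * \<bar>x0\<bar>"] exI[of _ "2 / r"]) auto
qed

lemma proper_fun_scale:
  assumes "a > 0" "proper_fun f"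
  shows "proper_fun (\<lambda>y. ereal a * f y)"
proof -
  have "ereal a * e > -\<infinity>" if "e > -\<infinity>" for e using that assms(1) by (cases e) auto
  moreover have "ereal a * e < \<infinity>" if "e < \<infinity>" for e using that assms(1) by (cases e) auto
  ultimately show ?thesis using assms(2) unfolding proper_fun_def by blast
qed

lemma convex_fun_scale:
  assumes "a > 0" "proper_fun f" "convex_fun f"
  shows "convex_fun (\<lambda>y. ereal a * f y)"
  unfolding convex_fun_def
proof (intro allI impI)
  fix x y t :: real assume t: "0 \<le> t \<and> t \<le> 1"
  have "f x \<noteq> -\<infinity>" "f y \<noteq> -\<infinity>" using assms(2) unfolding proper_fun_def by auto
  then have distr: "ereal a * (ereal t * f x + ereal (1 - t) * f y)
      = ereal t * (ereal a * f x) + ereal (1 - t) * (ereal a * f y)"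
    using t assms(1) by (cases "f x"; cases "f y") (auto simp: algebra_simps)
  have "ereal a * f (t * x + (1 - t) * y) \<le> ereal a * (ereal t * f x + ereal (1 - t) * f y)"
    using assms(1,3) t unfolding convex_fun_def by (intro ereal_mult_left_mono) auto
  then show "ereal a * f (t * x + (1 - t) * y) \<le> ereal t * (ereal a * f x) + ereal (1 - t) * (ereal a * f y)"
    by (simp only: distr)
qed

lemma lsc_fun_scale:
  assumes "a \<ge> 0" "lsc_fun f"
  shows "lsc_fun (\<lambda>y. ereal a * f y)"
  unfolding lsc_fun_def
proof (intro allI impI)
  fix x :: real and X :: "nat \<Rightarrow> real" assume "X \<longlonglongrightarrow> x"
  then have "ereal a * f x \<le> ereal a * liminf (\<lambda>n. f (X n))"
    using assms unfolding lsc_fun_def by (intro ereal_mult_left_mono) auto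
  also have "\<dots> = liminf (\<lambda>n. ereal a * f (X n))" by (rule Liminf_ereal_mult_left[symmetric]) (use assms in auto)
  finally show "ereal a * f x \<le> liminf (\<lambda>n. ereal a * f (X n))" .
qed

lemma lsc_fun_add_continuous:
  assumes "lsc_fun f" "continuous_on UNIV g"
  shows "lsc_fun (\<lambda>y. ereal (g y) + f y)"
  unfolding lsc_fun_def
proof (intro allI impI)
  fix x :: real and X :: "nat \<Rightarrow> real" assume X: "X \<longlonglongrightarrow> x"
  have "(\<lambda>n. ereal (g (X n))) \<longlonglongrightarrow> ereal (g x)"
    using assms(2) X by (intro tendsto_ereal) (auto intro: continuous_on_tendsto_compose)
  then have "liminf (\<lambda>n. ereal (g (X n)) + f (X n)) = ereal (g x) + liminf (\<lambda>n. f (X n))"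
    by (rule ereal_liminf_lim_add) simp
  moreover have "f x \<le> liminf (\<lambda>n. f (X n))" using assms(1) X unfolding lsc_fun_def by blast
  ultimately show "ereal (g x) + f x \<le> liminf (\<lambda>n. ereal (g (X n)) + f (X n))"
    by (simp add: add_left_mono)
qed

lemma lsc_fun_coercive_attains_min:
  fixes E :: "real \<Rightarrow> ereal"
  assumes lsc: "lsc_fun E" and below: "\<And>y. ereal M \<le> E y" and finite: "E x0 < \<infinity>"
    and sublevel: "\<And>t. bounded {y. E y \<le> ereal t}"
  shows "\<exists>l. \<forall>u. E l \<le> E u"
proof -
  define m where "m = (INF y. E y)"
  have "ereal M \<le> m" "m \<le> E x0" unfolding m_def by (auto intro: INF_greatest INF_lower below)
  with finite obtain mr where m: "m = ereal mr" by (cases m) auto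
  have "\<exists>y. E y < ereal (mr + inverse (real (Suc n)))" for n
    using m INF_less_iff[of E UNIV "ereal (mr + inverse (real (Suc n)))"] unfolding m_def by simp
  then obtain Y where Y: "\<And>n. E (Y n) < ereal (mr + inverse (real (Suc n)))" by metis
  have "E (Y n) \<le> ereal (mr + 1)" for n
  proof -
    have "inverse (real (Suc n)) \<le> 1" by (simp add: inverse_le_1_iff)
    then show ?thesis using Y[of n] by (metis add_left_mono ereal_less_eq(3) less_imp_le order_trans)
  qed
  then have "bounded (range Y)" using sublevel[of "mr + 1"] by (auto intro: bounded_subset)
  then obtain l r where r: "strict_mono r" and lim: "(Y \<circ> r) \<longlonglongrightarrow> l"
    using bounded_imp_convergent_subsequence by blast
  have "(\<lambda>n. inverse (real (Suc (r n)))) \<longlonglongrightarrow> 0"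
    using LIMSEQ_subseq_LIMSEQ[OF LIMSEQ_inverse_real_of_nat r] by (simp add: o_def)
  then have "(\<lambda>n. ereal (mr + inverse (real (Suc (r n))))) \<longlonglongrightarrow> ereal (mr + 0)"
    by (intro tendsto_ereal tendsto_add tendsto_const)
  then have "liminf (\<lambda>n. ereal (mr + inverse (real (Suc (r n))))) = m"
    using m by (simp add: lim_imp_Liminf)
  moreover have "E l \<le> liminf (\<lambda>n. E ((Y \<circ> r) n))" using lsc lim unfolding lsc_fun_def by blast
  moreover have "liminf (\<lambda>n. E ((Y \<circ> r) n)) \<le> liminf (\<lambda>n. ereal (mr + inverse (real (Suc (r n)))))"
    using Y by (intro Liminf_mono always_eventually) (simp add: less_imp_le)
  ultimately have "E l \<le> m" by simp
  then show ?thesis unfolding m_def by (meson INF_lower UNIV_I order_trans)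
qed

definition prox_objective :: "(real \<Rightarrow> ereal) \<Rightarrow> real \<Rightarrow> real \<Rightarrow> ereal" where
  "prox_objective f x y = ereal ((x - y)\<^sup>2 / 2) + f y"

lemma quadratic_sublevel_bound:
  fixes t p q :: real
  assumes "t \<ge> 0" "p \<ge> 0" "t\<^sup>2 / 2 - p * t \<le> q"
  shows "t \<le> 2 * p + 2 * \<bar>q\<bar> + 2"
proof (rule ccontr)
  assume "\<not> ?thesis"
  then have "t / 2 - p \<ge> \<bar>q\<bar> + 1" and "t \<ge> 1" using assms by auto
  then have "1 * (\<bar>q\<bar> + 1) \<le> t * (t / 2 - p)" by (intro mult_mono) auto
  also have "\<dots> = t\<^sup>2 / 2 - p * t" by (simp add: power2_eq_square algebra_simps)
  finally show False using assms(3) by (smt (verit))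
qed

lemma prox_objective_lower_bound:
  assumes minor: "\<And>y. ereal (C - D * \<bar>y\<bar>) \<le> f y" and D: "D \<ge> 0"
  shows "ereal (C - D * \<bar>x\<bar> - D\<^sup>2 / 2) \<le> prox_objective f x y"
proof (cases "f y")
  case (real v)
  have "C - D * \<bar>y\<bar> \<le> v" using minor[of y] real by simp
  moreover have "D * \<bar>y\<bar> \<le> D * \<bar>x\<bar> + D * \<bar>x - y\<bar>"
    using D by (simp add: mult_left_mono flip: distrib_left)
  moreover have "0 \<le> (\<bar>x - y\<bar> - D)\<^sup>2" by simp
  then have "- D\<^sup>2 / 2 \<le> (x - y)\<^sup>2 / 2 - D * \<bar>x - y\<bar>"
    by (simp add: power2_diff power2_abs algebra_simps)
  ultimately show ?thesis using real by (simp add: prox_objective_def)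
qed (use minor[of y] in \<open>auto simp: prox_objective_def\<close>)

lemma prox_objective_sublevel_bounded:
  assumes minor: "\<And>y. ereal (C - D * \<bar>y\<bar>) \<le> f y" and D: "D \<ge> 0"
  shows "bounded {y. prox_objective f x y \<le> ereal t}"
proof (rule boundedI)
  fix y assume "y \<in> {y. prox_objective f x y \<le> ereal t}"
  then have y: "prox_objective f x y \<le> ereal t" by simp
  obtain v where fy: "f y = ereal v"
    using y minor[of y] by (cases "f y") (auto simp: prox_objective_def)
  have "(x - y)\<^sup>2 / 2 + v \<le> t" using y fy by (simp add: prox_objective_def)
  moreover have "C - D * \<bar>y\<bar> \<le> v" using minor[of y] fy by simp
  moreover have "D * \<bar>y\<bar> \<le> D * \<bar>x\<bar> + D * \<bar>x - y\<bar>"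
    using D by (simp add: mult_left_mono flip: distrib_left)
  moreover have "\<bar>x - y\<bar>\<^sup>2 = (x - y)\<^sup>2" by simp
  ultimately have "\<bar>x - y\<bar>\<^sup>2 / 2 - D * \<bar>x - y\<bar> \<le> t - C + D * \<bar>x\<bar>" by linarith
  then have "\<bar>x - y\<bar> \<le> 2 * D + 2 * \<bar>t - C + D * \<bar>x\<bar>\<bar> + 2"
    using D by (intro quadratic_sublevel_bound) auto
  moreover have "\<bar>y\<bar> \<le> \<bar>x\<bar> + \<bar>x - y\<bar>" by linarith
  ultimately show "norm y \<le> \<bar>x\<bar> + (2 * D + 2 * \<bar>t - C + D * \<bar>x\<bar>\<bar> + 2)" by simp
qed

lemma prox_objective_minimizer_unique:
  assumes proper: "proper_fun f" and convex: "convex_fun f"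
    and ymin: "\<forall>u. prox_objective f x y \<le> prox_objective f x u"
    and lmin: "\<forall>u. prox_objective f x l \<le> prox_objective f x u"
  shows "y = l"
proof (rule ccontr)
  assume ne: "y \<noteq> l"
  obtain x0 where "f x0 < \<infinity>" using proper unfolding proper_fun_def by blast
  then have "prox_objective f x y < \<infinity>" "prox_objective f x l < \<infinity>"
    using ymin lmin by (auto simp: prox_objective_def intro: le_less_trans)
  moreover have "f y > -\<infinity>" "f l > -\<infinity>" using proper unfolding proper_fun_def by auto
  ultimately obtain vy vl where fy: "f y = ereal vy" and fl: "f l = ereal vl"
    by (cases "f y"; cases "f l") (auto simp: prox_objective_def)
  have "prox_objective f x y = prox_objective f x l" using ymin lmin by (meson antisym)
  then have eq: "(x - y)\<^sup>2 / 2 + vy = (x - l)\<^sup>2 / 2 + vl" using fy fl by (simp add: prox_objective_def)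
  define c where "c = (y + l) / 2"
  have "c = 1 / 2 * y + (1 - 1 / 2) * l" unfolding c_def by simp
  then have "f c \<le> ereal (1 / 2) * f y + ereal (1 - 1 / 2) * f l"
    using convex[unfolded convex_fun_def, rule_format, of "1 / 2" y l] by simp
  then have "f c \<le> ereal ((vy + vl) / 2)" using fy fl by (simp add: add_divide_distrib)
  then have Ec: "prox_objective f x c \<le> ereal ((x - c)\<^sup>2 / 2 + (vy + vl) / 2)"
    unfolding prox_objective_def by (metis add_left_mono plus_ereal.simps(1))
  have "(x - c)\<^sup>2 / 2 = ((x - y)\<^sup>2 / 2 + (x - l)\<^sup>2 / 2) / 2 - (y - l)\<^sup>2 / 8"
    unfolding c_def by (simp add: power2_eq_square field_simps)
  moreover have "(y - l)\<^sup>2 > 0" using ne by simp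
  ultimately have "(x - c)\<^sup>2 / 2 + (vy + vl) / 2 < (x - y)\<^sup>2 / 2 + vy" using eq by argo
  with Ec have "prox_objective f x c < prox_objective f x y"
    using fy by (simp add: prox_objective_def le_less_trans)
  then show False using ymin by (simp add: not_le[symmetric])
qed

lemma prox_minimizes:
  assumes proper: "proper_fun f" and convex: "convex_fun f" and lsc: "lsc_fun f"
  shows "prox_objective f x (prox f x) \<le> prox_objective f x u"
proof -
  obtain C D where D: "D \<ge> 0" and minor: "\<And>y. ereal (C - D * \<bar>y\<bar>) \<le> f y"
    using affine_minorant[OF proper convex lsc] by blast
  obtain x0 where "f x0 < \<infinity>" using proper unfolding proper_fun_def by blast
  then have fin: "prox_objective f x x0 < \<infinity>" by (simp add: prox_objective_def)
  have "lsc_fun (prox_objective f x)" unfolding prox_objective_def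
    by (intro lsc_fun_add_continuous lsc continuous_intros) simp
  then have "\<exists>l. \<forall>u. prox_objective f x l \<le> prox_objective f x u"
    using prox_objective_lower_bound[OF minor D] fin prox_objective_sublevel_bounded[OF minor D]
    by (rule lsc_fun_coercive_attains_min)
  then have "\<exists>!y. \<forall>u. prox_objective f x y \<le> prox_objective f x u"
    using prox_objective_minimizer_unique[OF proper convex] by blast
  from theI'[OF this] show ?thesis unfolding prox_def prox_objective_def by blast
qed

section \<open>Shrinkages and proximal filters\<close>

definition shrinkage :: "(real \<Rightarrow> real) \<Rightarrow> bool" where
  "shrinkage f \<longleftrightarrow> mono f \<and> (\<forall>x y. \<bar>f x - f y\<bar> \<le> \<bar>x - y\<bar>) \<and> f 0 = 0"

lemma shrinkage_between:
  assumes "shrinkage f"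
  shows "(0 \<le> f x \<and> f x \<le> x) \<or> (x \<le> f x \<and> f x \<le> 0)"
proof -
  have "\<bar>f x - f 0\<bar> \<le> \<bar>x - 0\<bar>" "f 0 = 0" using assms unfolding shrinkage_def by blast+
  moreover have "0 \<le> x \<Longrightarrow> f 0 \<le> f x" "x \<le> 0 \<Longrightarrow> f x \<le> f 0"
    using assms unfolding shrinkage_def mono_def by blast+
  ultimately show ?thesis by (cases "0 \<le> x") auto
qed

lemma shrinkage_abs_le: "shrinkage f \<Longrightarrow> \<bar>f x\<bar> \<le> \<bar>x\<bar>"
  using shrinkage_between[of f x] by auto

lemma shrinkage_continuous: "shrinkage f \<Longrightarrow> continuous_on UNIV f"
  unfolding shrinkage_def
  by (intro lipschitz_on_continuous_on[of 1] lipschitz_onI) (auto simp: dist_real_def)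

lemma shrinkage_tendsto:
  assumes "shrinkage f" "(X \<longlongrightarrow> x) F"
  shows "((\<lambda>n. f (X n)) \<longlongrightarrow> f x) F"
proof -
  have "isCont f x" using shrinkage_continuous[OF assms(1)] by (simp add: continuous_on_eq_continuous_at)
  then show ?thesis using assms(2) by (rule isCont_tendsto_compose)
qed

locale prox_filter =
  fixes s :: "real \<Rightarrow> ereal" and P :: "real \<Rightarrow> real \<Rightarrow> real"
  assumes proper: "proper_fun s" and convex: "convex_fun s" and lsc: "lsc_fun s"
    and s_zero: "s 0 = 0"
    and P_prox: "\<And>a. a > 0 \<Longrightarrow> P a = prox (\<lambda>y. ereal a * s y)"
    and P_shrinkage: "\<And>a. a > 0 \<Longrightarrow> shrinkage (P a)"
begin

lemma P_minimizes:
  assumes "a > 0"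
  shows "ereal ((x - P a x)\<^sup>2 / 2) + ereal a * s (P a x) \<le> ereal ((x - u)\<^sup>2 / 2) + ereal a * s u"
proof -
  have "prox_objective (\<lambda>y. ereal a * s y) x (prox (\<lambda>y. ereal a * s y) x)
      \<le> prox_objective (\<lambda>y. ereal a * s y) x u"
    using assms by (intro prox_minimizes proper_fun_scale convex_fun_scale lsc_fun_scale proper convex lsc) auto
  then show ?thesis using P_prox[OF assms] by (simp add: prox_objective_def)
qed

text \<open>Minimality of \<open>P a 0 = 0\<close> against \<open>u\<close> gives \<open>a * s u \<ge> - u\<^sup>2 / 2\<close> for every \<open>a > 0\<close>.\<close>
lemma s_nonneg: "0 \<le> s u"
proof (rule ccontr)
  assume "\<not> 0 \<le> s u"
  moreover have "s u > -\<infinity>" using proper unfolding proper_fun_def by blast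
  ultimately obtain v where v: "s u = ereal v" "v < 0" by (cases "s u") auto
  define a where "a = (u\<^sup>2 + 1) / (- v)"
  have a: "a > 0" using v(2) unfolding a_def by (intro divide_pos_pos) (auto intro: add_nonneg_pos)
  have av: "a * v = - (u\<^sup>2 + 1)" using v(2) by (simp add: a_def field_simps)
  have "P a 0 = 0" using P_shrinkage[OF a] unfolding shrinkage_def by blast
  then have "0 \<le> u\<^sup>2 / 2 + a * v" using P_minimizes[OF a, of 0 u] s_zero v(1) by simp
  then show False using av zero_le_power2[of u] by linarith
qed

lemma s_P_le_ereal:
  assumes a: "a > 0"
  shows "s (P a x) \<le> ereal (x\<^sup>2 / (2 * a))"
proof -
  have h: "ereal ((x - P a x)\<^sup>2 / 2) + ereal a * s (P a x) \<le> ereal (x\<^sup>2 / 2)"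
    using P_minimizes[OF a, of x 0] s_zero by simp
  have "s (P a x) \<noteq> \<infinity>"
  proof
    assume "s (P a x) = \<infinity>"
    then show False using h a by simp
  qed
  moreover have "s (P a x) \<noteq> -\<infinity>" using s_nonneg[of "P a x"] by auto
  ultimately obtain v where v: "s (P a x) = ereal v" by (cases "s (P a x)") auto
  have "(x - P a x)\<^sup>2 / 2 + a * v \<le> x\<^sup>2 / 2" using h v by simp
  moreover have "0 \<le> (x - P a x)\<^sup>2 / 2" by simp
  ultimately have "a * v \<le> x\<^sup>2 / 2" by linarith
  then have "v \<le> x\<^sup>2 / 2 / a" using a by (simp add: pos_le_divide_eq mult_ac)
  then show ?thesis using v by simp
qed

definition s_P :: "real \<Rightarrow> real \<Rightarrow> real" where
  "s_P a x = real_of_ereal (s (P a x))"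

lemma s_P_eq: "a > 0 \<Longrightarrow> s (P a x) = ereal (s_P a x)"
  using s_P_le_ereal[of a x] s_nonneg[of "P a x"] unfolding s_P_def by (cases "s (P a x)") auto

lemma s_P_nonneg: "a > 0 \<Longrightarrow> 0 \<le> s_P a x"
  using s_nonneg[of "P a x"] s_P_eq[of a x] by simp

lemma s_P_le: "a > 0 \<Longrightarrow> s_P a x \<le> x\<^sup>2 / (2 * a)"
  using s_P_le_ereal[of a x] s_P_eq[of a x] by simp

lemma s_P_minimizes:
  assumes "a > 0" "s u = ereal v"
  shows "(x - P a x)\<^sup>2 / 2 + a * s_P a x \<le> (x - u)\<^sup>2 / 2 + a * v"
  using P_minimizes[OF assms(1), of x u] s_P_eq[OF assms(1)] assms(2) by simp

lemma s_P_le_of_value: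
  assumes a: "a > 0" and u: "s u = ereal v"
  shows "s_P a x \<le> (x - u)\<^sup>2 / (2 * a) + v"
proof -
  have "a * s_P a x \<le> (x - u)\<^sup>2 / 2 + a * v"
    using s_P_minimizes[OF a u, of x] zero_le_power2[of "x - P a x"] by linarith
  then show ?thesis using a by (simp add: field_simps)
qed

lemma s_ge_prox_gap:
  assumes a: "a > 0"
  shows "ereal (((x - P a x)\<^sup>2 - (x - u)\<^sup>2) / (2 * a)) \<le> s u"
proof (cases "s u")
  case (real v)
  have "(x - P a x)\<^sup>2 / 2 + a * s_P a x \<le> (x - u)\<^sup>2 / 2 + a * v" by (rule s_P_minimizes[OF a real])
  moreover have "0 \<le> a * s_P a x" using s_P_nonneg[OF a, of x] a by simp
  ultimately have "((x - P a x)\<^sup>2 - (x - u)\<^sup>2) / 2 \<le> a * v" by argo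
  then have "((x - P a x)\<^sup>2 - (x - u)\<^sup>2) / 2 / a \<le> v" using a by (simp add: pos_divide_le_eq mult_ac)
  then show ?thesis using real by simp
qed (use s_nonneg[of u] in auto)

text \<open>Upper semicontinuity comes from the minimality of \<open>P a (X n)\<close> against the fixed point \<open>P a x\<close>.\<close>
lemma s_P_tendsto:
  assumes a: "a > 0" and X: "X \<longlonglongrightarrow> x"
  shows "(\<lambda>n. s_P a (X n)) \<longlonglongrightarrow> s_P a x"
proof -
  have PX: "(\<lambda>n. P a (X n)) \<longlonglongrightarrow> P a x" by (rule shrinkage_tendsto[OF P_shrinkage[OF a] X])
  show ?thesis
  proof (rule order_tendstoI)
    fix b assume b: "b < s_P a x"
    have "s (P a x) \<le> liminf (\<lambda>n. s (P a (X n)))" using lsc PX unfolding lsc_fun_def by blast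
    then have "ereal (s_P a x) \<le> liminf (\<lambda>n. ereal (s_P a (X n)))" using s_P_eq[OF a] by simp
    moreover have "ereal b < ereal (s_P a x)" using b by simp
    ultimately have "\<forall>\<^sub>F n in sequentially. ereal b < ereal (s_P a (X n))"
      unfolding le_Liminf_iff by blast
    then show "\<forall>\<^sub>F n in sequentially. b < s_P a (X n)" by simp
  next
    fix b assume b: "s_P a x < b"
    define g where "g n = ((X n - P a x)\<^sup>2 - (X n - P a (X n))\<^sup>2) / (2 * a) + s_P a x" for n
    have "g \<longlonglongrightarrow> ((x - P a x)\<^sup>2 - (x - P a x)\<^sup>2) / (2 * a) + s_P a x"
      unfolding g_def by (intro tendsto_intros X PX) (use a in auto)
    then have "g \<longlonglongrightarrow> s_P a x" by simp
    then have ev: "\<forall>\<^sub>F n in sequentially. g n < b" using b by (rule order_tendstoD(2))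
    have le: "s_P a (X n) \<le> g n" for n
    proof -
      have "(X n - P a (X n))\<^sup>2 / 2 + a * s_P a (X n) \<le> (X n - P a x)\<^sup>2 / 2 + a * s_P a x"
        by (rule s_P_minimizes[OF a s_P_eq[OF a]])
      then show ?thesis using a by (simp add: g_def field_simps)
    qed
    show "\<forall>\<^sub>F n in sequentially. s_P a (X n) < b"
      using ev by eventually_elim (use le in \<open>auto intro: le_less_trans\<close>)
  qed
qed

end

section \<open>Consequences of Assumption A\<close>

text \<open>The least preimage \<open>m\<close> of \<open>y0\<close> satisfies \<open>y0 = f m \<le> r * m\<close>, so \<open>\<bar>x\<bar> \<le> y0 / r\<close> lies below it.\<close>
lemma shrinkage_contraction_near_zero:
  assumes f: "shrinkage f" and y0: "y0 > 0" and r: "r > 0"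
    and contr: "\<forall>x. ereal \<bar>x\<bar> \<le> (INF w\<in>{w. f w = y0}. ereal w) \<longrightarrow> \<bar>f x\<bar> \<le> r * \<bar>x\<bar>"
    and x: "\<bar>x\<bar> \<le> y0 / r"
  shows "\<bar>f x\<bar> \<le> r * \<bar>x\<bar>"
proof -
  define S where "S = {w. f w = y0}"
  have S_pos: "w > 0" if "w \<in> S" for w
    using that shrinkage_between[OF f, of w] y0 unfolding S_def by auto
  have "ereal \<bar>x\<bar> \<le> (INF w\<in>S. ereal w)"
  proof (rule INF_greatest)
    fix w assume w: "w \<in> S"
    have "closed S" unfolding S_def
      by (rule closed_Collect_eq[OF shrinkage_continuous[OF f] continuous_on_const])
    moreover have bdd: "bdd_below S" using S_pos by (auto intro!: bdd_belowI[of _ 0] less_imp_le)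
    ultimately have mS: "Inf S \<in> S" using w by (intro closed_contains_Inf) auto
    have "ereal \<bar>Inf S\<bar> \<le> (INF w\<in>S. ereal w)"
      using S_pos[OF mS] bdd by (auto intro!: INF_greatest cInf_lower)
    then have "\<bar>f (Inf S)\<bar> \<le> r * \<bar>Inf S\<bar>" using contr unfolding S_def by blast
    then have "y0 \<le> r * Inf S" using mS S_pos[OF mS] y0 unfolding S_def by simp
    then have "y0 / r \<le> Inf S" using r by (simp add: divide_le_eq mult.commute)
    then show "ereal \<bar>x\<bar> \<le> ereal w" using x cInf_lower[OF w bdd] by simp
  qed
  then show ?thesis using contr unfolding S_def by blast
qed

lemma abs_add_scaled_diff_le_nonneg:
  fixes x y t :: real
  assumes t: "t > 0" and xy: "0 \<le> y" "y \<le> x"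
  shows "\<bar>y + t * (x - y)\<bar> \<le> max 1 t * \<bar>x\<bar>"
proof (cases "t \<le> 1")
  case True
  then have "t * (x - y) \<le> x - y" using t xy by (intro mult_left_le_one_le) auto
  then show ?thesis using True t xy by simp
next
  case False
  then have "0 \<le> (t - 1) * y" using xy by simp
  then have "y + t * (x - y) \<le> t * x" by (simp add: algebra_simps)
  then show ?thesis using False t xy by simp
qed

lemma abs_add_scaled_diff_le:
  fixes x y t :: real
  assumes t: "t > 0" and xy: "(0 \<le> y \<and> y \<le> x) \<or> (x \<le> y \<and> y \<le> 0)"
  shows "\<bar>y + t * (x - y)\<bar> \<le> max 1 t * \<bar>x\<bar>"
proof (cases "0 \<le> y \<and> y \<le> x")
  case True
  then show ?thesis using abs_add_scaled_diff_le_nonneg[OF t] by blast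
next
  case False
  then have "0 \<le> -y" "-y \<le> -x" using xy by auto
  from abs_add_scaled_diff_le_nonneg[OF t this] have "\<bar>-y + t * (-x - -y)\<bar> \<le> max 1 t * \<bar>-x\<bar>" .
  moreover have "-y + t * (-x - -y) = - (y + t * (x - y))" by (simp add: algebra_simps)
  ultimately show ?thesis by simp
qed

text \<open>By A1, \<open>g x = y\<close> also equals \<open>f w\<close> for \<open>w = y + (aT / a) * (x - y)\<close>.\<close>
lemma shrinkage_contraction_transfer:
  fixes f g :: "real \<Rightarrow> real"
  assumes g: "shrinkage g" and a: "a > 0" and aT: "aT > 0"
    and same_preimages: "\<forall>y. {(w - y) / a | w. g w = y} = {(w - y) / aT | w. f w = y}"
    and r: "r \<ge> 0" and contr: "\<And>w. \<bar>w\<bar> \<le> \<rho> \<Longrightarrow> \<bar>f w\<bar> \<le> r * \<bar>w\<bar>"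
    and x: "max 1 (aT / a) * \<bar>x\<bar> \<le> \<rho>"
  shows "\<bar>g x\<bar> \<le> max 1 (aT / a) * r * \<bar>x\<bar>"
proof -
  define y where "y = g x"
  have "(x - y) / a \<in> {(w - y) / aT | w. f w = y}" using same_preimages unfolding y_def by blast
  then obtain w where w: "f w = y" "(w - y) / aT = (x - y) / a" by (auto simp: eq_commute)
  have "w - y = aT * ((x - y) / a)" using w(2) aT by (simp add: field_simps)
  then have "w = y + (aT / a) * (x - y)" by (simp add: algebra_simps)
  then have wb: "\<bar>w\<bar> \<le> max 1 (aT / a) * \<bar>x\<bar>"
    unfolding y_def by (metis abs_add_scaled_diff_le a aT divide_pos_pos shrinkage_between[OF g])
  have "\<bar>f w\<bar> \<le> r * \<bar>w\<bar>" using wb x by (intro contr) linarith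
  also have "\<dots> \<le> r * (max 1 (aT / a) * \<bar>x\<bar>)" using wb r by (intro mult_left_mono) auto
  finally show ?thesis using w(1) unfolding y_def by (simp add: mult_ac)
qed

lemma quotient_growth_bound:
  fixes g :: "real \<Rightarrow> real"
  assumes contr: "\<And>x. T * \<bar>x\<bar> \<le> c * k / r \<Longrightarrow> \<bar>g x\<bar> \<le> T * r * \<bar>x\<bar>"
    and g_abs: "\<And>x. \<bar>g x\<bar> \<le> \<bar>x\<bar>"
    and T: "T \<ge> 1" and c: "c > 0" and k: "k > 0" "k \<le> K" and \<beta>: "\<beta> > 0"
    and r: "r = k\<^sup>2 / (k\<^sup>2 + \<beta>)"
  shows "\<bar>g x / k\<bar> \<le> (T * K / \<beta>) * \<bar>x\<bar> + (T / (c * \<beta>)) * x\<^sup>2"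
proof -
  have kb: "k\<^sup>2 + \<beta> > 0" using \<beta> by (simp add: add_nonneg_pos)
  have nn: "0 \<le> (T * K / \<beta>) * \<bar>x\<bar>" "0 \<le> (T / (c * \<beta>)) * x\<^sup>2" using T c k \<beta> by auto
  have eq: "\<bar>g x / k\<bar> = \<bar>g x\<bar> / k" using k by simp
  show ?thesis
  proof (cases "T * \<bar>x\<bar> \<le> c * k / r")
    case True
    have "r / k = (k * k) / ((k\<^sup>2 + \<beta>) * k)" unfolding r by (simp add: power2_eq_square)
    also have "\<dots> = k / (k\<^sup>2 + \<beta>)" using k by simp
    also have "\<dots> \<le> K / \<beta>"
    proof -
      have "k * \<beta> \<le> K * \<beta>" using k \<beta> by simp
      also have "\<dots> \<le> K * (k\<^sup>2 + \<beta>)" using k by (simp add: algebra_simps)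
      finally show ?thesis using kb \<beta> by (simp add: frac_le_eq field_simps)
    qed
    finally have rk: "r / k \<le> K / \<beta>" .
    have "\<bar>g x\<bar> / k \<le> T * r * \<bar>x\<bar> / k" using contr[OF True] k by (simp add: divide_right_mono)
    also have "\<dots> = T * \<bar>x\<bar> * (r / k)" by simp
    also have "\<dots> \<le> T * \<bar>x\<bar> * (K / \<beta>)" using rk T by (intro mult_left_mono) auto
    also have "\<dots> = (T * K / \<beta>) * \<bar>x\<bar>" by simp
    finally show ?thesis using eq nn by linarith
  next
    case False
    have "c * k / r = c * (k\<^sup>2 + \<beta>) / k" unfolding r using k kb by (simp add: power2_eq_square field_simps)
    also have "\<dots> \<ge> c * \<beta> / k" using c k \<beta> by (intro divide_right_mono mult_left_mono) auto
    finally have "c * \<beta> / k < T * \<bar>x\<bar>" using False by simp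
    then have h: "1 / k < T * \<bar>x\<bar> / (c * \<beta>)" using c \<beta> k by (simp add: field_simps)
    have "\<bar>g x\<bar> / k \<le> \<bar>x\<bar> * (1 / k)" using g_abs[of x] k by (simp add: divide_right_mono)
    also have "\<dots> \<le> \<bar>x\<bar> * (T * \<bar>x\<bar> / (c * \<beta>))" using h by (intro mult_left_mono) auto
    also have "\<dots> = (T / (c * \<beta>)) * x\<^sup>2" by (simp add: power2_eq_square abs_mult_self_eq field_simps)
    finally show ?thesis using eq nn by linarith
  qed
qed

lemma shrinkage_gap:
  assumes f: "shrinkage f" and contr: "\<bar>f x\<bar> \<le> r * \<bar>x\<bar>" and r: "r \<le> 1"
  shows "((1 - r) * x)\<^sup>2 \<le> (x - f x)\<^sup>2"
proof -
  have "0 \<le> 1 - r" using r by simp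
  then have "\<bar>(1 - r) * x\<bar> = (1 - r) * \<bar>x\<bar>" by (simp only: abs_mult abs_of_nonneg)
  also have "\<dots> = \<bar>x\<bar> - r * \<bar>x\<bar>" by (simp add: algebra_simps)
  also have "\<dots> \<le> \<bar>x\<bar> - \<bar>f x\<bar>" using contr by simp
  also have "\<dots> = \<bar>x - f x\<bar>" using shrinkage_between[OF f, of x] by auto
  finally have "\<bar>(1 - r) * x\<bar> \<le> \<bar>x - f x\<bar>" .
  then show ?thesis by (simp add: abs_le_square_iff)
qed

text \<open>The test point \<open>x = u N\<^sup>2 / E\<close> lies in the region where A2 applies, and for it the gap
  \<open>((1 - r) x)\<^sup>2 - (x - u)\<^sup>2\<close> with \<open>r = k\<^sup>2 / N\<close> is an exact multiple of \<open>u\<^sup>2\<close>.\<close>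
lemma lower_bound_test_point:
  fixes u k \<beta> c :: real
  assumes k: "k > 0" and \<beta>: "\<beta> > 0" and u: "\<bar>u\<bar> \<le> c * k"
  defines "N \<equiv> k\<^sup>2 + \<beta>" and "E \<equiv> k\<^sup>2 * (k\<^sup>2 + 2 * \<beta>)"
  shows "\<bar>u * N\<^sup>2 / E\<bar> \<le> c * k / (k\<^sup>2 / N)"
    and "((1 - k\<^sup>2 / N) * (u * N\<^sup>2 / E))\<^sup>2 - (u * N\<^sup>2 / E - u)\<^sup>2 = u\<^sup>2 * \<beta>\<^sup>2 / E"
proof -
  have N0: "N > 0" unfolding N_def using \<beta> by (simp add: add_nonneg_pos)
  have E0: "E > 0" unfolding E_def using k \<beta> by (simp add: add_nonneg_pos)
  have "k\<^sup>2 * N \<le> E" unfolding E_def N_def using \<beta> by (simp add: algebra_simps)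
  then have "N * (k\<^sup>2 * N) \<le> N * E" using N0 by (intro mult_left_mono) auto
  then have NE: "N\<^sup>2 / E \<le> N / k\<^sup>2" using E0 k by (simp add: field_simps power2_eq_square)
  have "\<bar>u * N\<^sup>2 / E\<bar> = \<bar>u\<bar> * (N\<^sup>2 / E)" using E0 by (simp add: abs_mult)
  also have "\<dots> \<le> (c * k) * (N / k\<^sup>2)" using u NE N0 E0 by (intro mult_mono) auto
  also have "\<dots> = c * k / (k\<^sup>2 / N)" using k N0 by (simp add: power2_eq_square field_simps)
  finally show "\<bar>u * N\<^sup>2 / E\<bar> \<le> c * k / (k\<^sup>2 / N)" .
  have h1: "1 - k\<^sup>2 / N = \<beta> / N" using N0 unfolding N_def by (simp add: field_simps)
  have h2: "N\<^sup>2 - E = \<beta>\<^sup>2" unfolding N_def E_def by (simp add: power2_eq_square algebra_simps)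
  have a: "(1 - k\<^sup>2 / N) * (u * N\<^sup>2 / E) = u * \<beta> * N / E" unfolding h1 using N0
    by (simp add: power2_eq_square field_simps)
  have b: "u * N\<^sup>2 / E - u = u * \<beta>\<^sup>2 / E" using E0 h2 by (simp add: field_simps)
  have "(u * \<beta> * N / E)\<^sup>2 - (u * \<beta>\<^sup>2 / E)\<^sup>2 = u\<^sup>2 * \<beta>\<^sup>2 * (N\<^sup>2 - \<beta>\<^sup>2) / E\<^sup>2"
    using E0 by (simp add: power2_eq_square field_simps)
  also have "N\<^sup>2 - \<beta>\<^sup>2 = E" using h2 by simp
  finally show "((1 - k\<^sup>2 / N) * (u * N\<^sup>2 / E))\<^sup>2 - (u * N\<^sup>2 / E - u)\<^sup>2 = u\<^sup>2 * \<beta>\<^sup>2 / E"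
    unfolding a b using E0 by (simp add: power2_eq_square)
qed

lemma (in prox_filter) s_ge_quadratic:
  assumes aT: "aT > 0" and k: "k > 0" "k \<le> K" and c: "c > 0" and \<beta>: "\<beta> > 0"
    and A2: "\<And>x. \<bar>x\<bar> \<le> c * k / (k\<^sup>2 / (k\<^sup>2 + \<beta>)) \<Longrightarrow> \<bar>P aT x\<bar> \<le> k\<^sup>2 / (k\<^sup>2 + \<beta>) * \<bar>x\<bar>"
    and u: "\<bar>u\<bar> \<le> c * k"
  shows "ereal (\<beta>\<^sup>2 / (2 * aT * (K\<^sup>2 + 2 * \<beta>)) * u\<^sup>2 / k\<^sup>2) \<le> s u"
proof -
  define N where "N = k\<^sup>2 + \<beta>"
  define E where "E = k\<^sup>2 * (k\<^sup>2 + 2 * \<beta>)"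
  define x where "x = u * N\<^sup>2 / E"
  have E0: "E > 0" unfolding E_def using k \<beta> by (simp add: add_nonneg_pos)
  have "\<bar>P aT x\<bar> \<le> k\<^sup>2 / N * \<bar>x\<bar>"
    using A2 lower_bound_test_point(1)[OF k(1) \<beta> u] unfolding x_def N_def E_def by blast
  moreover have "k\<^sup>2 / N \<le> 1" unfolding N_def using \<beta> by (simp add: add_nonneg_pos divide_le_eq_1)
  ultimately have "((1 - k\<^sup>2 / N) * x)\<^sup>2 \<le> (x - P aT x)\<^sup>2" by (rule shrinkage_gap[OF P_shrinkage[OF aT]])
  then have "u\<^sup>2 * \<beta>\<^sup>2 / E / (2 * aT) \<le> ((x - P aT x)\<^sup>2 - (x - u)\<^sup>2) / (2 * aT)"
    using lower_bound_test_point(2)[OF k(1) \<beta> u] aT unfolding x_def N_def E_def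
    by (intro divide_right_mono) auto
  moreover have "\<beta>\<^sup>2 / (2 * aT * (K\<^sup>2 + 2 * \<beta>)) * u\<^sup>2 / k\<^sup>2 \<le> u\<^sup>2 * \<beta>\<^sup>2 / E / (2 * aT)"
  proof -
    have "E \<le> k\<^sup>2 * (K\<^sup>2 + 2 * \<beta>)" unfolding E_def using k by (intro mult_left_mono power_mono) auto
    then have "u\<^sup>2 * \<beta>\<^sup>2 / (k\<^sup>2 * (K\<^sup>2 + 2 * \<beta>)) / (2 * aT) \<le> u\<^sup>2 * \<beta>\<^sup>2 / E / (2 * aT)"
      using E0 aT by (intro divide_right_mono divide_left_mono) auto
    then show ?thesis by (simp add: field_simps)
  qed
  ultimately show ?thesis using s_ge_prox_gap[OF aT, of x u] by (meson ereal_less_eq(3) order_trans)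
qed

lemma (in prox_filter) s_ge_linear:
  assumes aT: "aT > 0" and k: "k > 0" "k \<le> K" and c: "c > 0" and \<beta>: "\<beta> > 0"
    and A2: "\<And>x. \<bar>x\<bar> \<le> c * k / (k\<^sup>2 / (k\<^sup>2 + \<beta>)) \<Longrightarrow> \<bar>P aT x\<bar> \<le> k\<^sup>2 / (k\<^sup>2 + \<beta>) * \<bar>x\<bar>"
    and D: "D = \<beta>\<^sup>2 / (2 * aT * (K\<^sup>2 + 2 * \<beta>))"
    and u: "c * k \<le> \<bar>u\<bar>"
  shows "ereal (D * c * \<bar>u\<bar> / k) \<le> s u"
proof -
  have ck: "c * k > 0" using c k by simp
  then have u0: "\<bar>u\<bar> > 0" using u by linarith
  define t where "t = c * k / \<bar>u\<bar>"
  have t: "0 < t" "t \<le> 1" unfolding t_def using ck u0 u by auto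
  have tu: "\<bar>t * u\<bar> = c * k" unfolding t_def using u0 ck c k by (simp add: abs_mult)
  have "ereal (D * (t * u)\<^sup>2 / k\<^sup>2) \<le> s (t * u)"
    unfolding D by (rule s_ge_quadratic[OF aT k c \<beta> A2]) (use tu in auto)
  moreover have "(t * u)\<^sup>2 = (c * k)\<^sup>2" using tu by (metis power2_abs)
  ultimately have h1: "ereal (D * c\<^sup>2) \<le> s (t * u)" using k by (simp add: power_mult_distrib)
  have "s (t * u + (1 - t) * 0) \<le> ereal t * s u + ereal (1 - t) * s 0"
    by (rule convex[unfolded convex_fun_def, rule_format]) (use t in auto)
  then have h2: "s (t * u) \<le> ereal t * s u" using s_zero by simp
  show ?thesis
  proof (cases "s u = \<infinity>")
    case True then show ?thesis by simp
  next
    case False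
    moreover have "s u \<ge> 0" by (rule s_nonneg)
    ultimately obtain v where v: "s u = ereal v" by (cases "s u") auto
    have "D * c\<^sup>2 \<le> t * v" using h1 h2 v by (metis order_trans times_ereal.simps(1) ereal_less_eq(3))
    then have "D * c\<^sup>2 / t \<le> v" using t by (simp add: pos_divide_le_eq mult.commute)
    moreover have "D * c\<^sup>2 / t = D * c * \<bar>u\<bar> / k" unfolding t_def using c k u0
      by (simp add: power2_eq_square field_simps)
    ultimately show ?thesis using v by simp
  qed
qed

lemma (in prox_filter) sq_div_le_of_s:
  assumes aT: "aT > 0" and k: "k > 0" "k \<le> K" and c: "c > 0" and \<beta>: "\<beta> > 0"
    and A2: "\<And>x. \<bar>x\<bar> \<le> c * k / (k\<^sup>2 / (k\<^sup>2 + \<beta>)) \<Longrightarrow> \<bar>P aT x\<bar> \<le> k\<^sup>2 / (k\<^sup>2 + \<beta>) * \<bar>x\<bar>"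
    and D: "D = \<beta>\<^sup>2 / (2 * aT * (K\<^sup>2 + 2 * \<beta>))"
    and su: "s u = ereal \<sigma>"
  shows "(u / k)\<^sup>2 \<le> \<sigma> / D + (\<sigma> / (D * c))\<^sup>2"
proof -
  have K: "K > 0" using k by simp
  have D0: "D > 0" unfolding D using \<beta> aT K by (intro divide_pos_pos mult_pos_pos) (auto intro: add_pos_pos)
  have s0': "\<sigma> \<ge> 0" using s_nonneg[of u] su by simp
  have nn: "0 \<le> \<sigma> / D" "0 \<le> (\<sigma> / (D * c))\<^sup>2" using s0' D0 by auto
  show ?thesis
  proof (cases "\<bar>u\<bar> \<le> c * k")
    case True
    have "ereal (D * u\<^sup>2 / k\<^sup>2) \<le> s u"
      unfolding D by (rule s_ge_quadratic[OF aT k c \<beta> A2 True])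
    then have "D * u\<^sup>2 / k\<^sup>2 \<le> \<sigma>" using su by simp
    then have "D * (u / k)\<^sup>2 \<le> \<sigma>" by (simp add: power_divide)
    then have "(u / k)\<^sup>2 \<le> \<sigma> / D" using D0 by (simp add: pos_le_divide_eq mult.commute)
    then show ?thesis using nn by linarith
  next
    case nb: False
    have nb': "c * k \<le> \<bar>u\<bar>" using nb by linarith
    have "ereal (D * c * \<bar>u\<bar> / k) \<le> s u"
      by (rule s_ge_linear[OF aT k c \<beta> A2 D nb'])
    then have "D * c * \<bar>u\<bar> / k \<le> \<sigma>" using su by simp
    then have "(D * c) * \<bar>u / k\<bar> \<le> \<sigma>" using k by simp
    then have h: "\<bar>u / k\<bar> \<le> \<sigma> / (D * c)" using D0 c by (simp add: pos_le_divide_eq mult.commute)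
    have "(u / k)\<^sup>2 = \<bar>u / k\<bar>\<^sup>2" by (rule power2_abs[symmetric])
    also have "\<dots> \<le> (\<sigma> / (D * c))\<^sup>2" using h by (intro power_mono) auto
    finally show ?thesis using nn by linarith
  qed
qed


section \<open>Square-summable sequences\<close>

definition l2sq :: "('i \<Rightarrow> real) \<Rightarrow> real" where
  "l2sq x = (\<Sum>\<^sub>\<infinity>i. (x i)\<^sup>2)"

lemma l2sq_nonneg: "0 \<le> l2sq x"
  unfolding l2sq_def by (rule infsum_nonneg) simp

lemma l2sq_eq: "l2sq x = (l2norm x)\<^sup>2"
  unfolding l2norm_def l2sq_def[symmetric] using l2sq_nonneg[of x] by simp

lemma l2norm_nonneg: "0 \<le> l2norm x"
  unfolding l2norm_def l2sq_def[symmetric] using l2sq_nonneg[of x] by simp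

lemma l2_summable_on: "x \<in> l2 \<Longrightarrow> (\<lambda>i. (x i)\<^sup>2) summable_on A"
  unfolding l2_def by (auto intro: summable_on_subset_banach)

lemma infsum_sq_le_l2sq: "x \<in> l2 \<Longrightarrow> (\<Sum>\<^sub>\<infinity>i\<in>A. (x i)\<^sup>2) \<le> l2sq x"
  unfolding l2sq_def by (rule infsum_mono2) (auto intro: l2_summable_on)

lemma sq_le_l2sq: "x \<in> l2 \<Longrightarrow> (x i)\<^sup>2 \<le> l2sq x"
  using infsum_sq_le_l2sq[of x "{i}"] by simp

lemma abs_le_l2norm: "x \<in> l2 \<Longrightarrow> \<bar>x i\<bar> \<le> l2norm x"
  using sq_le_l2sq[of x i] by (simp add: l2norm_def l2sq_def real_le_rsqrt)

lemma sq_dominated_summable_on: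
  fixes f :: "'i \<Rightarrow> real"
  assumes x: "x \<in> l2" and y: "y \<in> l2" and f: "\<And>i. 0 \<le> f i" "\<And>i. f i \<le> C * (x i)\<^sup>2 + C * (y i)\<^sup>2"
  shows "f summable_on A"
    and "infsum f A \<le> C * (\<Sum>\<^sub>\<infinity>i\<in>A. (x i)\<^sup>2) + C * (\<Sum>\<^sub>\<infinity>i\<in>A. (y i)\<^sup>2)"
proof -
  have sx: "(\<lambda>i. (x i)\<^sup>2) summable_on A" and sy: "(\<lambda>i. (y i)\<^sup>2) summable_on A"
    using x y by (auto intro: l2_summable_on)
  have sC: "(\<lambda>i. C * (x i)\<^sup>2 + C * (y i)\<^sup>2) summable_on A"
    using sx sy by (intro summable_on_add summable_on_cmult_right)
  show sf: "f summable_on A" by (rule summable_on_comparison_test[OF sC]) (use f in auto)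
  have "infsum f A \<le> (\<Sum>\<^sub>\<infinity>i\<in>A. C * (x i)\<^sup>2 + C * (y i)\<^sup>2)" by (rule infsum_mono[OF sf sC]) (use f in auto)
  also have "\<dots> = C * (\<Sum>\<^sub>\<infinity>i\<in>A. (x i)\<^sup>2) + C * (\<Sum>\<^sub>\<infinity>i\<in>A. (y i)\<^sup>2)"
    using sx sy by (simp add: infsum_add summable_on_cmult_right infsum_cmult_right')
  finally show "infsum f A \<le> C * (\<Sum>\<^sub>\<infinity>i\<in>A. (x i)\<^sup>2) + C * (\<Sum>\<^sub>\<infinity>i\<in>A. (y i)\<^sup>2)" .
qed

lemma l2_dominated:
  assumes x: "x \<in> l2" and b: "\<And>i. (y i)\<^sup>2 \<le> C * (x i)\<^sup>2"
  shows "y \<in> l2" and "l2sq y \<le> C * l2sq x"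
proof -
  have "0 \<le> C * (x i)\<^sup>2" for i using b[of i] zero_le_power2[of "y i"] by linarith
  then have b': "(y i)\<^sup>2 \<le> C * (x i)\<^sup>2 + C * (0::real)\<^sup>2" for i using b[of i] by simp
  have z: "(\<lambda>_. 0::real) \<in> l2" by (simp add: l2_def)
  show "y \<in> l2" unfolding l2_def using sq_dominated_summable_on(1)[OF x z _ b'] by simp
  show "l2sq y \<le> C * l2sq x" unfolding l2sq_def using sq_dominated_summable_on(2)[OF x z _ b'] by simp
qed

lemma l2_add:
  assumes x: "x \<in> l2" and y: "y \<in> l2"
  shows "(\<lambda>i. x i + y i) \<in> l2"
    and "(\<Sum>\<^sub>\<infinity>i\<in>A. (x i + y i)\<^sup>2) \<le> 2 * (\<Sum>\<^sub>\<infinity>i\<in>A. (x i)\<^sup>2) + 2 * (\<Sum>\<^sub>\<infinity>i\<in>A. (y i)\<^sup>2)"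
proof -
  have b: "(x i + y i)\<^sup>2 \<le> 2 * (x i)\<^sup>2 + 2 * (y i)\<^sup>2" for i
    using zero_le_power2[of "x i - y i"] by (simp add: power2_eq_square algebra_simps)
  show "(\<lambda>i. x i + y i) \<in> l2" unfolding l2_def
    using sq_dominated_summable_on(1)[OF x y _ b] by simp
  show "(\<Sum>\<^sub>\<infinity>i\<in>A. (x i + y i)\<^sup>2) \<le> 2 * (\<Sum>\<^sub>\<infinity>i\<in>A. (x i)\<^sup>2) + 2 * (\<Sum>\<^sub>\<infinity>i\<in>A. (y i)\<^sup>2)"
    using sq_dominated_summable_on(2)[OF x y _ b] by simp
qed

lemma l2_diff: "x \<in> l2 \<Longrightarrow> y \<in> l2 \<Longrightarrow> (\<lambda>i. x i - y i) \<in> l2"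
  using l2_add(1)[of x "\<lambda>i. - y i"] by (simp add: l2_def)

lemma l2_inner_summable_on:
  assumes "x \<in> l2" "y \<in> l2"
  shows "(\<lambda>i. x i * y i) summable_on A"
proof -
  have "(\<lambda>i. norm (z i * z i)) summable_on UNIV" if "z \<in> l2" for z :: "'i \<Rightarrow> real"
    using l2_summable_on[OF that] by (simp add: power2_eq_square abs_mult_self_eq)
  then have "(\<lambda>i. norm (x i * y i)) summable_on UNIV"
    using assms by (intro Infinite_Sum.abs_summable_product[of x UNIV y]) blast+
  then have "(\<lambda>i. x i * y i) summable_on UNIV" by (rule abs_summable_summable)
  then show ?thesis by (rule summable_on_subset_banach) simp
qed

lemma ereal_infsum:
  fixes f :: "'i \<Rightarrow> real"
  assumes "f summable_on A"
  shows "(\<Sum>\<^sub>\<infinity>i\<in>A. ereal (f i)) = ereal (infsum f A)"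
proof -
  have "ereal (infsum f A) = infsum (ereal \<circ> f) A"
    by (simp add: infsum_comm_additive_general assms)
  then show ?thesis by (simp add: o_def)
qed

lemma infsum_split_finite:
  fixes f :: "'i \<Rightarrow> real"
  assumes "f summable_on UNIV" "finite F"
  shows "infsum f UNIV = sum f F + infsum f (- F)"
proof -
  have "infsum f (F \<union> - F) = infsum f F + infsum f (- F)"
    by (rule infsum_Un_disjoint) (use assms in \<open>auto intro: summable_on_subset_banach\<close>)
  then show ?thesis using assms(2) by (simp add: infsum_finite)
qed

lemma infsum_tail_small:
  fixes h :: "'i \<Rightarrow> real"
  assumes "h summable_on UNIV" "e > 0"
  shows "\<exists>F. finite F \<and> infsum h (- F) \<le> e"
proof -
  obtain F where F: "finite F" "dist (sum h F) (infsum h UNIV) \<le> e"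
    using infsum_finite_approximation[OF assms] by blast
  then have "infsum h (- F) \<le> e"
    using infsum_split_finite[OF assms(1) F(1)] by (simp add: dist_real_def abs_le_iff)
  then show ?thesis using F(1) by blast
qed

lemma infsum_sq_le_sq_infsum:
  fixes f :: "'i \<Rightarrow> real"
  assumes s: "f summable_on UNIV" and f0: "\<And>i. 0 \<le> f i"
  shows "(\<lambda>i. (f i)\<^sup>2) summable_on UNIV" and "(\<Sum>\<^sub>\<infinity>i. (f i)\<^sup>2) \<le> (infsum f UNIV)\<^sup>2"
proof -
  have "f i \<le> infsum f UNIV" for i
    using finite_sum_le_infsum[OF s, of "{i}"] f0 by simp
  then have b: "(f i)\<^sup>2 \<le> f i * infsum f UNIV" for i
    unfolding power2_eq_square using f0 by (intro mult_left_mono)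
  have sS: "(\<lambda>i. f i * infsum f UNIV) summable_on UNIV" using s by (rule summable_on_cmult_left)
  show ss: "(\<lambda>i. (f i)\<^sup>2) summable_on UNIV"
    by (rule summable_on_comparison_test[OF sS]) (use b in auto)
  have "(\<Sum>\<^sub>\<infinity>i. (f i)\<^sup>2) \<le> (\<Sum>\<^sub>\<infinity>i. f i * infsum f UNIV)" by (rule infsum_mono[OF ss sS b])
  then show "(\<Sum>\<^sub>\<infinity>i. (f i)\<^sup>2) \<le> (infsum f UNIV)\<^sup>2" by (simp add: infsum_cmult_left' power2_eq_square)
qed

lemma tendsto_infsum_uniform_tails:
  fixes f :: "nat \<Rightarrow> 'i \<Rightarrow> real" and g :: "'i \<Rightarrow> real"
  assumes sf: "\<And>k. f k summable_on UNIV" and sg: "g summable_on UNIV"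
    and pointwise: "\<And>i. (\<lambda>k. f k i) \<longlonglongrightarrow> g i"
    and tails: "\<And>e. e > 0 \<Longrightarrow> \<exists>F N. finite F \<and> (\<forall>k\<ge>N. \<bar>infsum (f k) (- F)\<bar> \<le> e) \<and> \<bar>infsum g (- F)\<bar> \<le> e"
  shows "(\<lambda>k. infsum (f k) UNIV) \<longlonglongrightarrow> infsum g UNIV"
proof (rule LIMSEQ_I)
  fix e :: real assume e: "e > 0"
  then obtain F N where F: "finite F" and N: "\<And>k. k \<ge> N \<Longrightarrow> \<bar>infsum (f k) (- F)\<bar> \<le> e / 3"
    and G: "\<bar>infsum g (- F)\<bar> \<le> e / 3"
    using tails[of "e / 3"] by auto
  have "(\<lambda>k. sum (f k) F) \<longlonglongrightarrow> sum g F" by (intro tendsto_sum pointwise)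
  then obtain N2 where N2: "\<And>k. k \<ge> N2 \<Longrightarrow> \<bar>sum (f k) F - sum g F\<bar> < e / 3"
    using LIMSEQ_D[of _ "sum g F" "e / 3"] e by force
  show "\<exists>N. \<forall>k\<ge>N. norm (infsum (f k) UNIV - infsum g UNIV) < e"
  proof (intro exI allI impI)
    fix k assume "max N N2 \<le> k"
    then have "\<bar>infsum (f k) (- F)\<bar> \<le> e / 3" "\<bar>sum (f k) F - sum g F\<bar> < e / 3" using N N2 by auto
    moreover have "infsum (f k) UNIV - infsum g UNIV
        = (sum (f k) F - sum g F) + infsum (f k) (- F) - infsum g (- F)"
      using infsum_split_finite[OF sf F, of k] infsum_split_finite[OF sg F] by simp
    ultimately show "norm (infsum (f k) UNIV - infsum g UNIV) < e" using G by (simp add: abs_if split: if_splits)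
  qed
qed

lemma infsum_inner_le:
  assumes x: "x \<in> l2" and y: "y \<in> l2" and \<eta>: "\<eta> > 0"
  shows "\<bar>\<Sum>\<^sub>\<infinity>i\<in>A. x i * y i\<bar> \<le> \<eta> / 2 * (\<Sum>\<^sub>\<infinity>i\<in>A. (x i)\<^sup>2) + 1 / (2 * \<eta>) * (\<Sum>\<^sub>\<infinity>i\<in>A. (y i)\<^sup>2)"
proof -
  define g where "g i = \<eta> / 2 * (x i)\<^sup>2 + 1 / (2 * \<eta>) * (y i)\<^sup>2" for i
  have "norm (x i * y i) \<le> g i" for i
  proof -
    have "0 \<le> (\<eta> * \<bar>x i\<bar> - \<bar>y i\<bar>)\<^sup>2" by simp
    then have "2 * \<eta> * \<bar>x i * y i\<bar> \<le> \<eta>\<^sup>2 * (x i)\<^sup>2 + (y i)\<^sup>2"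
      by (simp add: power2_eq_square algebra_simps abs_mult)
    then have "\<bar>x i * y i\<bar> \<le> (\<eta>\<^sup>2 * (x i)\<^sup>2 + (y i)\<^sup>2) / (2 * \<eta>)"
      using \<eta> by (simp add: pos_le_divide_eq mult_ac)
    also have "\<dots> = g i" using \<eta> by (simp add: g_def power2_eq_square field_simps)
    finally show ?thesis by simp
  qed
  moreover have sx: "(\<lambda>i. (x i)\<^sup>2) summable_on A" and sy: "(\<lambda>i. (y i)\<^sup>2) summable_on A"
    using x y by (auto intro: l2_summable_on)
  then have "g summable_on A" unfolding g_def by (intro summable_on_add summable_on_cmult_right)
  ultimately have "norm (\<Sum>\<^sub>\<infinity>i\<in>A. x i * y i) \<le> infsum g A"
    by (intro norm_infsum_le[OF has_sum_infsum has_sum_infsum] l2_inner_summable_on x y)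
  also have "infsum g A = (\<Sum>\<^sub>\<infinity>i\<in>A. \<eta> / 2 * (x i)\<^sup>2) + (\<Sum>\<^sub>\<infinity>i\<in>A. 1 / (2 * \<eta>) * (y i)\<^sup>2)"
    unfolding g_def using sx sy by (intro infsum_add summable_on_cmult_right)
  also have "\<dots> = \<eta> / 2 * (\<Sum>\<^sub>\<infinity>i\<in>A. (x i)\<^sup>2) + 1 / (2 * \<eta>) * (\<Sum>\<^sub>\<infinity>i\<in>A. (y i)\<^sup>2)"
    by (simp only: infsum_cmult_right')
  finally show ?thesis by simp
qed

lemma infsum_inner_tail_le:
  assumes x: "x \<in> l2" and y: "y \<in> l2" and B: "l2sq x \<le> B" and \<eta>: "\<eta> > 0"
    and tail: "(\<Sum>\<^sub>\<infinity>i\<in>A. (y i)\<^sup>2) \<le> \<eta>\<^sup>2"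
  shows "\<bar>\<Sum>\<^sub>\<infinity>i\<in>A. x i * y i\<bar> \<le> \<eta> * (B + 1) / 2"
proof -
  have "\<eta> / 2 * (\<Sum>\<^sub>\<infinity>i\<in>A. (x i)\<^sup>2) \<le> \<eta> / 2 * B"
    using infsum_sq_le_l2sq[OF x, of A] B \<eta> by (intro mult_left_mono) auto
  moreover have "1 / (2 * \<eta>) * (\<Sum>\<^sub>\<infinity>i\<in>A. (y i)\<^sup>2) \<le> 1 / (2 * \<eta>) * \<eta>\<^sup>2"
    using tail \<eta> by (intro mult_left_mono) auto
  ultimately have "\<bar>\<Sum>\<^sub>\<infinity>i\<in>A. x i * y i\<bar> \<le> \<eta> / 2 * B + 1 / (2 * \<eta>) * \<eta>\<^sup>2"
    using infsum_inner_le[OF x y \<eta>, of A] by linarith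
  also have "\<dots> = \<eta> * (B + 1) / 2" using \<eta> by (simp add: power2_eq_square field_simps)
  finally show ?thesis .
qed

lemma l2norm_diff_tendsto_pointwise:
  assumes X: "\<And>k. X k \<in> l2" and z: "z \<in> l2" and conv: "(\<lambda>k. l2norm (\<lambda>i. X k i - z i)) \<longlonglongrightarrow> 0"
  shows "(\<lambda>k. X k i) \<longlonglongrightarrow> z i"
proof -
  have le: "\<bar>X k i - z i\<bar> \<le> l2norm (\<lambda>i. X k i - z i)" for k
    using abs_le_l2norm[OF l2_diff[OF X z], of k i] by simp
  have "(\<lambda>k. \<bar>X k i - z i\<bar>) \<longlonglongrightarrow> 0"
    by (rule tendsto_sandwich[of "\<lambda>_. 0" _ _ "\<lambda>k. l2norm (\<lambda>i. X k i - z i)", OF _ _ tendsto_const conv])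
      (simp_all add: le)
  then show ?thesis by (simp add: LIM_zero_iff tendsto_rabs_zero_iff)
qed

lemma l2norm_diff_tendsto_bounded:
  assumes X: "\<And>k. X k \<in> l2" and z: "z \<in> l2" and conv: "(\<lambda>k. l2norm (\<lambda>i. X k i - z i)) \<longlonglongrightarrow> 0"
  obtains B where "\<And>k. l2sq (X k) \<le> B"
proof -
  have "Bseq (\<lambda>k. l2norm (\<lambda>i. X k i - z i))" using conv by (rule convergent_imp_Bseq[OF convergentI])
  then obtain K where K: "\<forall>k. norm (l2norm (\<lambda>i. X k i - z i)) \<le> K" by (auto elim: BseqE)
  have "l2sq (X k) \<le> 2 * K\<^sup>2 + 2 * l2sq z" for k
  proof -
    have "l2sq (\<lambda>i. (X k i - z i) + z i) \<le> 2 * l2sq (\<lambda>i. X k i - z i) + 2 * l2sq z"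
      unfolding l2sq_def by (rule l2_add(2)[OF l2_diff[OF X z] z])
    moreover have "l2sq (\<lambda>i. X k i - z i) \<le> K\<^sup>2"
      unfolding l2sq_eq using power_mono[OF K[rule_format, of k, unfolded real_norm_def] abs_ge_zero, of 2] by simp
    ultimately show ?thesis by simp
  qed
  then show ?thesis by (rule that)
qed

lemma weak_conv_l2I:
  fixes X :: "nat \<Rightarrow> 'i \<Rightarrow> real"
  assumes X: "\<And>k. X k \<in> l2" and c: "c \<in> l2" and bounded: "\<And>k. l2sq (X k) \<le> B"
    and pointwise: "\<And>i. (\<lambda>k. X k i) \<longlonglongrightarrow> c i"
  shows "weak_conv_l2 X c"
  unfolding weak_conv_l2_def
proof (intro conjI ballI allI X c)
  fix y :: "'i \<Rightarrow> real" assume y: "y \<in> l2"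
  show "(\<lambda>k. \<Sum>\<^sub>\<infinity>i. X k i * y i) \<longlonglongrightarrow> (\<Sum>\<^sub>\<infinity>i. c i * y i)"
  proof (rule tendsto_infsum_uniform_tails)
    show "(\<lambda>i. X k i * y i) summable_on UNIV" for k by (rule l2_inner_summable_on[OF X y])
    show "(\<lambda>i. c i * y i) summable_on UNIV" by (rule l2_inner_summable_on[OF c y])
    show "(\<lambda>k. X k i * y i) \<longlonglongrightarrow> c i * y i" for i by (intro tendsto_intros pointwise)
  next
    fix e :: real assume e: "e > 0"
    define B0 where "B0 = max B (l2sq c)"
    have B0: "B0 \<ge> 0" using l2sq_nonneg[of c] by (simp add: B0_def)
    define \<eta> where "\<eta> = e / (B0 + 1)"
    have \<eta>: "\<eta> > 0" using e B0 by (simp add: \<eta>_def)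
    obtain F where F: "finite F" "(\<Sum>\<^sub>\<infinity>i\<in>- F. (y i)\<^sup>2) \<le> \<eta>\<^sup>2"
      using infsum_tail_small[OF l2_summable_on[OF y], of "\<eta>\<^sup>2"] \<eta> by auto
    have tail: "\<bar>\<Sum>\<^sub>\<infinity>i\<in>- F. x i * y i\<bar> \<le> e" if "x \<in> l2" "l2sq x \<le> B0" for x
      using infsum_inner_tail_le[OF that(1) y that(2) \<eta> F(2)] e B0 by (simp add: \<eta>_def)
    have "l2sq (X k) \<le> B0" for k using bounded[of k] by (simp add: B0_def)
    moreover have "l2sq c \<le> B0" by (simp add: B0_def)
    ultimately show "\<exists>F N. finite F \<and> (\<forall>k\<ge>N. \<bar>infsum (\<lambda>i. X k i * y i) (- F)\<bar> \<le> e)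
        \<and> \<bar>infsum (\<lambda>i. c i * y i) (- F)\<bar> \<le> e"
      using F(1) tail[OF X] tail[OF c] by blast
  qed
qed

text \<open>Fatou's lemma for sums of nonnegative terms.\<close>
lemma eventually_gt_infsum:
  fixes \<sigma> :: "nat \<Rightarrow> 'i \<Rightarrow> real" and g :: "'i \<Rightarrow> real"
  assumes s\<sigma>: "\<And>k. \<sigma> k summable_on UNIV" and \<sigma>0: "\<And>k i. 0 \<le> \<sigma> k i"
    and sg: "g summable_on UNIV"
    and pointwise: "\<And>i \<eta>. \<eta> > 0 \<Longrightarrow> \<forall>\<^sub>F k in sequentially. g i - \<eta> < \<sigma> k i"
    and b: "b < infsum g UNIV"
  shows "\<forall>\<^sub>F k in sequentially. b < infsum (\<sigma> k) UNIV"
proof -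
  define e where "e = (infsum g UNIV - b) / 2"
  have e: "e > 0" using b by (simp add: e_def)
  obtain F where F: "finite F" "infsum g (- F) \<le> e / 2"
    using infsum_tail_small[OF sg, of "e / 2"] e by auto
  define \<eta> where "\<eta> = e / (2 * (real (card F) + 1))"
  have \<eta>: "\<eta> > 0" and card: "real (card F) * \<eta> < e / 2" using e by (simp_all add: \<eta>_def field_simps)
  have "\<forall>\<^sub>F k in sequentially. \<forall>i\<in>F. g i - \<eta> < \<sigma> k i"
    by (rule eventually_ball_finite[OF F(1)]) (use pointwise[OF \<eta>] in blast)
  then show ?thesis
  proof eventually_elim
    case (elim k)
    have "sum g F - real (card F) * \<eta> = (\<Sum>i\<in>F. g i - \<eta>)" by (simp add: sum_subtractf)
    also have "\<dots> \<le> sum (\<sigma> k) F" using elim by (intro sum_mono) (auto intro: less_imp_le)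
    also have "\<dots> \<le> infsum (\<sigma> k) UNIV" by (rule finite_sum_le_infsum[OF s\<sigma> F(1)]) (use \<sigma>0 in auto)
    finally show ?case using infsum_split_finite[OF sg F(1)] F(2) card e_def b by argo
  qed
qed

section \<open>The filtered reconstruction\<close>

locale filtered_regularization =
  fixes \<phi> :: "real \<Rightarrow> real \<Rightarrow> real \<Rightarrow> real"
    and \<kappa> :: "'i::countable \<Rightarrow> real"
    and s :: "'i \<Rightarrow> real \<Rightarrow> ereal"
  assumes filt: "nonlin_reg_filter \<phi>"
    and A: "assumptionA \<phi>"
    and \<kappa>_pos: "\<And>i. \<kappa> i > 0"
    and \<kappa>_bdd: "bdd_above (range \<kappa>)"
    and s_proper: "\<And>i. proper_fun (s i)"
    and s_convex: "\<And>i. convex_fun (s i)"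
    and s_lsc: "\<And>i. lsc_fun (s i)"
    and s_zero: "\<And>i. s i 0 = 0"
    and s_prox: "\<And>i a. a > 0 \<Longrightarrow> \<phi> a (\<kappa> i) = prox (\<lambda>y. ereal a * s i y)"
begin

lemma \<phi>_shrinkage: "a > 0 \<Longrightarrow> k > 0 \<Longrightarrow> shrinkage (\<phi> a k)"
  using filt unfolding nonlin_reg_filter_def shrinkage_def by blast

lemma \<phi>_tendsto_id: "k > 0 \<Longrightarrow> ((\<lambda>a. \<phi> a k c) \<longlongrightarrow> c) (at_right 0)"
  using filt unfolding nonlin_reg_filter_def by blast

lemma prox_filter_coordinate: "prox_filter (s i) (\<lambda>a. \<phi> a (\<kappa> i))"
proof
  show "proper_fun (s i)" "convex_fun (s i)" "lsc_fun (s i)" "s i 0 = 0"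
    by (rule s_proper s_convex s_lsc s_zero)+
  show "\<phi> a (\<kappa> i) = prox (\<lambda>y. ereal a * s i y)" if "a > 0" for a by (rule s_prox[OF that])
  show "shrinkage (\<phi> a (\<kappa> i))" if "a > 0" for a by (rule \<phi>_shrinkage[OF that \<kappa>_pos])
qed

definition s_\<phi> :: "'i \<Rightarrow> real \<Rightarrow> real \<Rightarrow> real" where
  "s_\<phi> i a x = prox_filter.s_P (s i) (\<lambda>a. \<phi> a (\<kappa> i)) a x"

lemma s_\<phi>_eq: "a > 0 \<Longrightarrow> s i (\<phi> a (\<kappa> i) x) = ereal (s_\<phi> i a x)"
  unfolding s_\<phi>_def by (rule prox_filter.s_P_eq[OF prox_filter_coordinate])

lemma s_\<phi>_nonneg: "a > 0 \<Longrightarrow> 0 \<le> s_\<phi> i a x"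
  unfolding s_\<phi>_def by (rule prox_filter.s_P_nonneg[OF prox_filter_coordinate])

lemma s_\<phi>_le: "a > 0 \<Longrightarrow> s_\<phi> i a x \<le> x\<^sup>2 / (2 * a)"
  unfolding s_\<phi>_def by (rule prox_filter.s_P_le[OF prox_filter_coordinate])

definition \<kappa>_max :: real where
  "\<kappa>_max = Sup (range \<kappa>)"

lemma \<kappa>_le_max: "\<kappa> i \<le> \<kappa>_max"
  unfolding \<kappa>_max_def using \<kappa>_bdd by (auto intro: cSup_upper)

lemma same_preimages:
  "k > 0 \<Longrightarrow> a > 0 \<Longrightarrow> b > 0 \<Longrightarrow> {(w - y) / a | w. \<phi> a k w = y} = {(w - y) / b | w. \<phi> b k w = y}"
  using A unfolding assumptionA_def by blast

lemma contraction_near_zero: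
  obtains aT \<beta> c where "aT > 0" "\<beta> > 0" "c > 0"
    and "\<And>k x. k > 0 \<Longrightarrow> \<bar>x\<bar> \<le> c * k / (k\<^sup>2 / (k\<^sup>2 + \<beta>)) \<Longrightarrow> \<bar>\<phi> aT k x\<bar> \<le> k\<^sup>2 / (k\<^sup>2 + \<beta>) * \<bar>x\<bar>"
proof -
  obtain aT b c where aT: "aT > 0" and b: "b > 0" and c: "c > 0"
    and A2: "\<And>k x. k > 0 \<Longrightarrow> ereal \<bar>x\<bar> \<le> (INF w\<in>{w. \<phi> aT k w = c * k}. ereal w) \<Longrightarrow>
        \<bar>\<phi> aT k x\<bar> \<le> k\<^sup>2 / (k\<^sup>2 + aT * b) * \<bar>x\<bar>"
    using A unfolding assumptionA_def by auto
  have contr: "\<bar>\<phi> aT k x\<bar> \<le> k\<^sup>2 / (k\<^sup>2 + aT * b) * \<bar>x\<bar>"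
    if k: "k > 0" and x: "\<bar>x\<bar> \<le> c * k / (k\<^sup>2 / (k\<^sup>2 + aT * b))" for k x
    using shrinkage_contraction_near_zero[OF \<phi>_shrinkage[OF aT k] _ _ _ x] A2[OF k] c k aT b
    by (simp add: add_nonneg_pos)
  show ?thesis by (rule that[OF aT _ c contr]) (use aT b in simp)
qed

lemma filter_quotient_growth:
  assumes a: "a > 0"
  obtains L M where "L \<ge> 0" "M \<ge> 0" "\<And>i x. \<bar>\<phi> a (\<kappa> i) x / \<kappa> i\<bar> \<le> L * \<bar>x\<bar> + M * x\<^sup>2"
proof -
  obtain aT \<beta> c where aT: "aT > 0" and \<beta>: "\<beta> > 0" and c: "c > 0"
    and contr: "\<And>k x. k > 0 \<Longrightarrow> \<bar>x\<bar> \<le> c * k / (k\<^sup>2 / (k\<^sup>2 + \<beta>)) \<Longrightarrow> \<bar>\<phi> aT k x\<bar> \<le> k\<^sup>2 / (k\<^sup>2 + \<beta>) * \<bar>x\<bar>"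
    using contraction_near_zero by blast
  define T where "T = max 1 (aT / a)"
  have growth: "\<bar>\<phi> a (\<kappa> i) x / \<kappa> i\<bar> \<le> (T * \<kappa>_max / \<beta>) * \<bar>x\<bar> + (T / (c * \<beta>)) * x\<^sup>2" for i x
  proof (rule quotient_growth_bound[OF _ shrinkage_abs_le[OF \<phi>_shrinkage[OF a \<kappa>_pos]] _ c \<kappa>_pos \<kappa>_le_max \<beta> refl])
    fix x' assume x': "T * \<bar>x'\<bar> \<le> c * \<kappa> i / ((\<kappa> i)\<^sup>2 / ((\<kappa> i)\<^sup>2 + \<beta>))"
    show "\<bar>\<phi> a (\<kappa> i) x'\<bar> \<le> T * ((\<kappa> i)\<^sup>2 / ((\<kappa> i)\<^sup>2 + \<beta>)) * \<bar>x'\<bar>"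
      unfolding T_def
    proof (rule shrinkage_contraction_transfer[OF \<phi>_shrinkage[OF a \<kappa>_pos] a aT])
      show "\<forall>y. {(w - y) / a |w. \<phi> a (\<kappa> i) w = y} = {(w - y) / aT |w. \<phi> aT (\<kappa> i) w = y}"
        using same_preimages[OF \<kappa>_pos a aT] by blast
      show "0 \<le> (\<kappa> i)\<^sup>2 / ((\<kappa> i)\<^sup>2 + \<beta>)" using \<beta> by (simp add: add_nonneg_pos less_imp_le)
    qed (use contr[OF \<kappa>_pos] x' T_def in auto)
  qed (simp add: T_def)
  have "\<kappa>_max > 0" using \<kappa>_le_max[of undefined] \<kappa>_pos[of undefined] by linarith
  then show ?thesis using \<beta> c by (intro that[OF _ _ growth]) (auto simp: T_def)
qed

lemma Mk_plus_Phi_sq_le: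
  assumes a: "a > 0"
  obtains L M :: real
  where "\<And>w i. w \<in> l2 \<Longrightarrow> (Mk_plus \<kappa> (Phi \<phi> a \<kappa> w) i)\<^sup>2 \<le> (2 * L\<^sup>2 + 2 * M\<^sup>2 * l2sq w) * (w i)\<^sup>2"
proof -
  obtain L M where LM: "L \<ge> 0" "M \<ge> 0" "\<And>i x. \<bar>\<phi> a (\<kappa> i) x / \<kappa> i\<bar> \<le> L * \<bar>x\<bar> + M * x\<^sup>2"
    using filter_quotient_growth[OF a] by blast
  have "(Mk_plus \<kappa> (Phi \<phi> a \<kappa> w) i)\<^sup>2 \<le> (2 * L\<^sup>2 + 2 * M\<^sup>2 * l2sq w) * (w i)\<^sup>2"
    if w: "w \<in> l2" for w i
  proof -
    have "(Mk_plus \<kappa> (Phi \<phi> a \<kappa> w) i)\<^sup>2 \<le> (L * \<bar>w i\<bar> + M * (w i)\<^sup>2)\<^sup>2"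
      unfolding Mk_plus_def Phi_def power2_abs[symmetric, of "_ / _"]
      using LM(3)[of i "w i"] by (intro power_mono) auto
    also have "\<dots> \<le> 2 * (L * \<bar>w i\<bar>)\<^sup>2 + 2 * (M * (w i)\<^sup>2)\<^sup>2"
      using zero_le_power2[of "L * \<bar>w i\<bar> - M * (w i)\<^sup>2"] by (simp add: power2_eq_square algebra_simps)
    also have "(L * \<bar>w i\<bar>)\<^sup>2 = L\<^sup>2 * (w i)\<^sup>2" by (simp add: power_mult_distrib)
    also have "(M * (w i)\<^sup>2)\<^sup>2 = M\<^sup>2 * (w i)\<^sup>2 * (w i)\<^sup>2" by (simp add: power2_eq_square)
    also have "\<dots> \<le> M\<^sup>2 * l2sq w * (w i)\<^sup>2"
      using sq_le_l2sq[OF w, of i] by (intro mult_right_mono mult_left_mono) auto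
    finally show ?thesis by (simp add: algebra_simps)
  qed
  then show ?thesis by (rule that)
qed

lemma Mk_plus_Phi_in_l2:
  assumes "a > 0" "w \<in> l2"
  shows "Mk_plus \<kappa> (Phi \<phi> a \<kappa> w) \<in> l2"
proof -
  obtain L M :: real
    where LM: "\<And>w i. w \<in> l2 \<Longrightarrow> (Mk_plus \<kappa> (Phi \<phi> a \<kappa> w) i)\<^sup>2 \<le> (2 * L\<^sup>2 + 2 * M\<^sup>2 * l2sq w) * (w i)\<^sup>2"
    using Mk_plus_Phi_sq_le[OF assms(1)] by blast
  show ?thesis by (rule l2_dominated(1)[OF assms(2) LM[OF assms(2)]])
qed

lemma Mk_plus_Phi_bounded:
  assumes a: "a > 0" and X: "\<And>k. X k \<in> l2" and B: "\<And>k. l2sq (X k) \<le> B"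
  shows "\<exists>C. \<forall>k. l2sq (Mk_plus \<kappa> (Phi \<phi> a \<kappa> (X k))) \<le> C"
proof -
  obtain L M :: real
    where LM: "\<And>w i. w \<in> l2 \<Longrightarrow> (Mk_plus \<kappa> (Phi \<phi> a \<kappa> w) i)\<^sup>2 \<le> (2 * L\<^sup>2 + 2 * M\<^sup>2 * l2sq w) * (w i)\<^sup>2"
    using Mk_plus_Phi_sq_le[OF a] by blast
  have "l2sq (Mk_plus \<kappa> (Phi \<phi> a \<kappa> (X k))) \<le> (2 * L\<^sup>2 + 2 * M\<^sup>2 * B) * B" for k
  proof -
    have "l2sq (Mk_plus \<kappa> (Phi \<phi> a \<kappa> (X k))) \<le> (2 * L\<^sup>2 + 2 * M\<^sup>2 * l2sq (X k)) * l2sq (X k)"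
      using l2_dominated(2)[OF X LM[OF X]] .
    also have "\<dots> \<le> (2 * L\<^sup>2 + 2 * M\<^sup>2 * B) * B"
      using B[of k] l2sq_nonneg[of "X k"] by (intro mult_mono add_left_mono mult_left_mono) auto
    finally show ?thesis .
  qed
  then show ?thesis by blast
qed

lemma dom_MPhi_eq_l2:
  assumes a: "a > 0"
  shows "dom_MPhi \<phi> a \<kappa> = l2"
proof -
  have "Phi \<phi> a \<kappa> w \<in> l2" if "w \<in> l2" for w
  proof (rule l2_dominated(1)[OF that, of _ 1])
    fix i
    show "(Phi \<phi> a \<kappa> w i)\<^sup>2 \<le> 1 * (w i)\<^sup>2"
      using shrinkage_abs_le[OF \<phi>_shrinkage[OF a \<kappa>_pos[of i]], of "w i"] by (simp add: Phi_def abs_le_square_iff)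
  qed
  then show ?thesis using Mk_plus_Phi_in_l2[OF a] unfolding dom_MPhi_def dom_Mk_plus_def Mk_plus_def by blast
qed

lemma Rfun_Mk_plus_Phi:
  assumes a: "a > 0" and w: "w \<in> l2"
  shows "(\<lambda>i. s_\<phi> i a (w i)) summable_on UNIV"
    and "Rfun s \<kappa> (Mk_plus \<kappa> (Phi \<phi> a \<kappa> w)) = ereal (\<Sum>\<^sub>\<infinity>i. s_\<phi> i a (w i))"
proof -
  have "(\<lambda>i. (w i)\<^sup>2 / (2 * a)) summable_on UNIV"
    using summable_on_cmult_left[OF l2_summable_on[OF w], of "1 / (2 * a)"] by simp
  then show sm: "(\<lambda>i. s_\<phi> i a (w i)) summable_on UNIV"
    by (rule summable_on_comparison_test) (use s_\<phi>_le[OF a] s_\<phi>_nonneg[OF a] in auto)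
  have "s i (\<kappa> i * Mk_plus \<kappa> (Phi \<phi> a \<kappa> w) i) = ereal (s_\<phi> i a (w i))" for i
    using \<kappa>_pos[of i] s_\<phi>_eq[OF a] by (simp add: Mk_plus_def Phi_def)
  then have "Rfun s \<kappa> (Mk_plus \<kappa> (Phi \<phi> a \<kappa> w)) = (\<Sum>\<^sub>\<infinity>i. ereal (s_\<phi> i a (w i)))"
    unfolding Rfun_def by (rule infsum_cong)
  also have "\<dots> = ereal (\<Sum>\<^sub>\<infinity>i. s_\<phi> i a (w i))" by (rule ereal_infsum[OF sm])
  finally show "Rfun s \<kappa> (Mk_plus \<kappa> (Phi \<phi> a \<kappa> w)) = ereal (\<Sum>\<^sub>\<infinity>i. s_\<phi> i a (w i))" .
qed

lemma infsum_s_\<phi>_le: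
  assumes a: "a > 0" and w: "w \<in> l2"
  shows "\<bar>\<Sum>\<^sub>\<infinity>i\<in>A. s_\<phi> i a (w i)\<bar> \<le> (\<Sum>\<^sub>\<infinity>i\<in>A. (w i)\<^sup>2) / (2 * a)"
proof -
  have "s_\<phi> i a (w i) \<le> 1 / (2 * a) * (w i)\<^sup>2 + 1 / (2 * a) * 0\<^sup>2" for i
    using s_\<phi>_le[OF a] by simp
  then have "(\<Sum>\<^sub>\<infinity>i\<in>A. s_\<phi> i a (w i)) \<le> 1 / (2 * a) * (\<Sum>\<^sub>\<infinity>i\<in>A. (w i)\<^sup>2) + 1 / (2 * a) * (\<Sum>\<^sub>\<infinity>i\<in>A. 0\<^sup>2)"
    by (intro sq_dominated_summable_on(2)[OF w]) (auto simp: l2_def s_\<phi>_nonneg[OF a])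
  moreover have "0 \<le> (\<Sum>\<^sub>\<infinity>i\<in>A. s_\<phi> i a (w i))" by (intro infsum_nonneg s_\<phi>_nonneg[OF a])
  ultimately show ?thesis by simp
qed

lemma sq_quotient_le_s:
  obtains D c :: real where "D > 0" "c > 0"
    and "\<And>i u \<sigma>. s i u = ereal \<sigma> \<Longrightarrow> (u / \<kappa> i)\<^sup>2 \<le> \<sigma> / D + (\<sigma> / (D * c))\<^sup>2"
proof -
  obtain aT \<beta> c where aT: "aT > 0" and \<beta>: "\<beta> > 0" and c: "c > 0"
    and contr: "\<And>k x. k > 0 \<Longrightarrow> \<bar>x\<bar> \<le> c * k / (k\<^sup>2 / (k\<^sup>2 + \<beta>)) \<Longrightarrow> \<bar>\<phi> aT k x\<bar> \<le> k\<^sup>2 / (k\<^sup>2 + \<beta>) * \<bar>x\<bar>"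
    using contraction_near_zero by blast
  define D where "D = \<beta>\<^sup>2 / (2 * aT * (\<kappa>_max\<^sup>2 + 2 * \<beta>))"
  have "\<kappa>_max > 0" using \<kappa>_le_max[of undefined] \<kappa>_pos[of undefined] by linarith
  then have "D > 0" unfolding D_def using \<beta> aT by (intro divide_pos_pos mult_pos_pos) (auto intro: add_pos_pos)
  moreover have "(u / \<kappa> i)\<^sup>2 \<le> \<sigma> / D + (\<sigma> / (D * c))\<^sup>2" if "s i u = ereal \<sigma>" for i u \<sigma>
    by (rule prox_filter.sq_div_le_of_s[OF prox_filter_coordinate aT \<kappa>_pos \<kappa>_le_max c \<beta> contr[OF \<kappa>_pos] D_def that])
  ultimately show ?thesis using that c by blast
qed

lemma l2sq_le_Rfun:
  obtains D c :: real where "D > 0" "c > 0"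
    and "\<And>a w. a > 0 \<Longrightarrow> w \<in> l2 \<Longrightarrow>
      l2sq (Mk_plus \<kappa> (Phi \<phi> a \<kappa> w)) \<le> (\<Sum>\<^sub>\<infinity>i. s_\<phi> i a (w i)) / D + ((\<Sum>\<^sub>\<infinity>i. s_\<phi> i a (w i)) / (D * c))\<^sup>2"
proof -
  obtain D c :: real where D: "D > 0" and c: "c > 0"
    and sq_le: "\<And>i u \<sigma>. s i u = ereal \<sigma> \<Longrightarrow> (u / \<kappa> i)\<^sup>2 \<le> \<sigma> / D + (\<sigma> / (D * c))\<^sup>2"
    using sq_quotient_le_s by blast
  have "l2sq (Mk_plus \<kappa> (Phi \<phi> a \<kappa> w)) \<le> (\<Sum>\<^sub>\<infinity>i. s_\<phi> i a (w i)) / D + ((\<Sum>\<^sub>\<infinity>i. s_\<phi> i a (w i)) / (D * c))\<^sup>2"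
    if a: "a > 0" and w: "w \<in> l2" for a w
  proof -
    define \<sigma> where "\<sigma> = (\<lambda>i. s_\<phi> i a (w i))"
    have s\<sigma>: "\<sigma> summable_on UNIV" unfolding \<sigma>_def by (rule Rfun_Mk_plus_Phi(1)[OF a w])
    have \<sigma>0: "0 \<le> \<sigma> i" for i unfolding \<sigma>_def by (rule s_\<phi>_nonneg[OF a])
    have s\<sigma>2: "(\<lambda>i. (\<sigma> i)\<^sup>2) summable_on UNIV" and \<sigma>2: "(\<Sum>\<^sub>\<infinity>i. (\<sigma> i)\<^sup>2) \<le> (infsum \<sigma> UNIV)\<^sup>2"
      using infsum_sq_le_sq_infsum[OF s\<sigma> \<sigma>0] by auto
    have g1: "(\<lambda>i. \<sigma> i * (1 / D)) summable_on UNIV" using s\<sigma> by (rule summable_on_cmult_left)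
    have g2: "(\<lambda>i. (\<sigma> i)\<^sup>2 * (1 / (D * c))\<^sup>2) summable_on UNIV" using s\<sigma>2 by (rule summable_on_cmult_left)
    have Mk_l2: "Mk_plus \<kappa> (Phi \<phi> a \<kappa> w) \<in> l2" by (rule Mk_plus_Phi_in_l2[OF a w])
    have "l2sq (Mk_plus \<kappa> (Phi \<phi> a \<kappa> w)) \<le> (\<Sum>\<^sub>\<infinity>i. \<sigma> i * (1 / D) + (\<sigma> i)\<^sup>2 * (1 / (D * c))\<^sup>2)"
      unfolding l2sq_def
    proof (rule infsum_mono[OF l2_summable_on[OF Mk_l2] summable_on_add[OF g1 g2]])
      fix i
      have "(\<phi> a (\<kappa> i) (w i) / \<kappa> i)\<^sup>2 \<le> \<sigma> i / D + (\<sigma> i / (D * c))\<^sup>2"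
        unfolding \<sigma>_def by (rule sq_le[OF s_\<phi>_eq[OF a]])
      then show "(Mk_plus \<kappa> (Phi \<phi> a \<kappa> w) i)\<^sup>2 \<le> \<sigma> i * (1 / D) + (\<sigma> i)\<^sup>2 * (1 / (D * c))\<^sup>2"
        by (simp add: Mk_plus_def Phi_def power_divide)
    qed
    also have "\<dots> = infsum \<sigma> UNIV * (1 / D) + (\<Sum>\<^sub>\<infinity>i. (\<sigma> i)\<^sup>2) * (1 / (D * c))\<^sup>2"
      by (simp only: infsum_add[OF g1 g2] infsum_cmult_left')
    also have "\<dots> \<le> infsum \<sigma> UNIV * (1 / D) + (infsum \<sigma> UNIV)\<^sup>2 * (1 / (D * c))\<^sup>2"
      using \<sigma>2 by (intro add_left_mono mult_right_mono) auto
    finally show ?thesis by (simp add: \<sigma>_def power_divide)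
  qed
  then show ?thesis using that D c by blast
qed

context
  fixes z :: "'i \<Rightarrow> real" and zk :: "nat \<Rightarrow> 'i \<Rightarrow> real"
  assumes z_l2: "z \<in> l2" and zk_l2: "\<And>k. zk k \<in> l2"
    and zk_conv: "(\<lambda>k. l2norm (\<lambda>i. zk k i - z i)) \<longlonglongrightarrow> 0"
begin

lemma stability_weak_conv:
  assumes a: "a > 0"
  shows "weak_conv_l2 (\<lambda>k. Mk_plus \<kappa> (Phi \<phi> a \<kappa> (zk k))) (Mk_plus \<kappa> (Phi \<phi> a \<kappa> z))"
proof -
  obtain B where B: "\<And>k. l2sq (zk k) \<le> B" using l2norm_diff_tendsto_bounded[OF zk_l2 z_l2 zk_conv] by blast
  obtain C where C: "\<And>k. l2sq (Mk_plus \<kappa> (Phi \<phi> a \<kappa> (zk k))) \<le> C"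
    using Mk_plus_Phi_bounded[where X = zk, OF a zk_l2 B] by blast
  show ?thesis
  proof (rule weak_conv_l2I[OF Mk_plus_Phi_in_l2[OF a zk_l2] Mk_plus_Phi_in_l2[OF a z_l2] C])
    show "(\<lambda>k. Mk_plus \<kappa> (Phi \<phi> a \<kappa> (zk k)) i) \<longlonglongrightarrow> Mk_plus \<kappa> (Phi \<phi> a \<kappa> z) i" for i
      unfolding Mk_plus_def Phi_def
      by (intro tendsto_divide tendsto_const shrinkage_tendsto[OF \<phi>_shrinkage[OF a \<kappa>_pos]]
          l2norm_diff_tendsto_pointwise[OF zk_l2 z_l2 zk_conv]) (use \<kappa>_pos[of i] in auto)
  qed
qed

lemma stability_tails:
  assumes a: "a > 0" and e: "e > 0"
  shows "\<exists>F N. finite F \<and> (\<forall>k\<ge>N. \<bar>\<Sum>\<^sub>\<infinity>i\<in>- F. s_\<phi> i a (zk k i)\<bar> \<le> e)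
    \<and> \<bar>\<Sum>\<^sub>\<infinity>i\<in>- F. s_\<phi> i a (z i)\<bar> \<le> e"
proof -
  define d where "d k = (\<lambda>i. zk k i - z i)" for k
  have d: "d k \<in> l2" for k unfolding d_def by (rule l2_diff[OF zk_l2 z_l2])
  have ae: "a * e / 2 > 0" using a e by simp
  obtain F where F: "finite F" "(\<Sum>\<^sub>\<infinity>i\<in>- F. (z i)\<^sup>2) \<le> a * e / 2"
    using infsum_tail_small[OF l2_summable_on[OF z_l2] ae] by auto
  have "(\<lambda>k. l2sq (d k)) \<longlonglongrightarrow> 0"
    unfolding l2sq_eq d_def using tendsto_power[OF zk_conv, of 2] by simp
  then have "\<forall>\<^sub>F k in sequentially. l2sq (d k) < a * e / 2" using ae by (rule order_tendstoD(2))
  then obtain N where N: "\<And>k. k \<ge> N \<Longrightarrow> l2sq (d k) \<le> a * e / 2"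
    unfolding eventually_sequentially by (meson less_imp_le)
  have "\<bar>\<Sum>\<^sub>\<infinity>i\<in>- F. s_\<phi> i a (zk k i)\<bar> \<le> e" if "k \<ge> N" for k
  proof -
    have "(\<Sum>\<^sub>\<infinity>i\<in>- F. (d k i + z i)\<^sup>2) \<le> 2 * (\<Sum>\<^sub>\<infinity>i\<in>- F. (d k i)\<^sup>2) + 2 * (\<Sum>\<^sub>\<infinity>i\<in>- F. (z i)\<^sup>2)"
      by (rule l2_add(2)[OF d z_l2])
    also have "\<dots> \<le> 2 * a * e"
      using infsum_sq_le_l2sq[OF d, of k "- F"] N[OF that] F(2) by linarith
    finally have "(\<Sum>\<^sub>\<infinity>i\<in>- F. (zk k i)\<^sup>2) / (2 * a) \<le> 2 * a * e / (2 * a)"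
      using a by (intro divide_right_mono) (auto simp: d_def)
    then show ?thesis using infsum_s_\<phi>_le[OF a zk_l2, of k "- F"] a by simp
  qed
  moreover have "\<bar>\<Sum>\<^sub>\<infinity>i\<in>- F. s_\<phi> i a (z i)\<bar> \<le> e"
  proof -
    have "(\<Sum>\<^sub>\<infinity>i\<in>- F. (z i)\<^sup>2) / (2 * a) \<le> (a * e / 2) / (2 * a)"
      using F(2) a by (intro divide_right_mono) auto
    also have "\<dots> \<le> e" using a e by (simp add: field_simps)
    finally show ?thesis using infsum_s_\<phi>_le[OF a z_l2, of "- F"] by simp
  qed
  ultimately show ?thesis using F(1) by blast
qed

lemma stability_Rfun:
  assumes a: "a > 0"
  shows "(\<lambda>k. Rfun s \<kappa> (Mk_plus \<kappa> (Phi \<phi> a \<kappa> (zk k)))) \<longlonglongrightarrow> Rfun s \<kappa> (Mk_plus \<kappa> (Phi \<phi> a \<kappa> z))"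
  unfolding Rfun_Mk_plus_Phi(2)[OF a zk_l2] Rfun_Mk_plus_Phi(2)[OF a z_l2]
proof (rule tendsto_ereal, rule tendsto_infsum_uniform_tails)
  show "(\<lambda>i. s_\<phi> i a (zk k i)) summable_on UNIV" for k by (rule Rfun_Mk_plus_Phi(1)[OF a zk_l2])
  show "(\<lambda>i. s_\<phi> i a (z i)) summable_on UNIV" by (rule Rfun_Mk_plus_Phi(1)[OF a z_l2])
  show "(\<lambda>k. s_\<phi> i a (zk k i)) \<longlonglongrightarrow> s_\<phi> i a (z i)" for i
    unfolding s_\<phi>_def
    by (rule prox_filter.s_P_tendsto[OF prox_filter_coordinate a l2norm_diff_tendsto_pointwise[OF zk_l2 z_l2 zk_conv]])
qed (rule stability_tails[OF a])

context
  fixes cplus :: "'i \<Rightarrow> real" and \<delta> \<alpha>k :: "nat \<Rightarrow> real" and a\<^sub>s :: real and w :: "'i \<Rightarrow> real"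
  assumes cplus_l2: "cplus \<in> l2" and z_eq: "z = Mk \<kappa> cplus"
    and a\<^sub>s_pos: "a\<^sub>s > 0" and w_l2: "w \<in> l2" and source: "Phi \<phi> a\<^sub>s \<kappa> w = z"
    and \<delta>_bound: "\<And>k. l2norm (\<lambda>i. zk k i - z i) \<le> \<delta> k"
    and \<alpha>k_pos: "\<And>k. \<alpha>k k > 0" and \<alpha>k_tendsto: "\<alpha>k \<longlonglongrightarrow> 0"
    and \<delta>\<alpha>k_tendsto: "(\<lambda>k. (\<delta> k)\<^sup>2 / \<alpha>k k) \<longlonglongrightarrow> 0"
begin

lemma s_source: "s i (z i) = ereal (s_\<phi> i a\<^sub>s (w i))"
  using source s_\<phi>_eq[OF a\<^sub>s_pos] unfolding Phi_def by metis

lemma Rfun_cplus: "Rfun s \<kappa> cplus = ereal (\<Sum>\<^sub>\<infinity>i. s_\<phi> i a\<^sub>s (w i))"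
proof -
  have "s i (\<kappa> i * cplus i) = ereal (s_\<phi> i a\<^sub>s (w i))" for i
    using s_source[of i] z_eq unfolding Mk_def by simp
  then have "Rfun s \<kappa> cplus = (\<Sum>\<^sub>\<infinity>i. ereal (s_\<phi> i a\<^sub>s (w i)))" unfolding Rfun_def by (rule infsum_cong)
  also have "\<dots> = ereal (\<Sum>\<^sub>\<infinity>i. s_\<phi> i a\<^sub>s (w i))" by (rule ereal_infsum[OF Rfun_Mk_plus_Phi(1)[OF a\<^sub>s_pos w_l2]])
  finally show ?thesis .
qed

text \<open>Testing the prox at the noisy data \<open>zk k\<close> against the exact data \<open>z\<close>.\<close>
lemma Rfun_noisy_le:
  "(\<Sum>\<^sub>\<infinity>i. s_\<phi> i (\<alpha>k k) (zk k i)) \<le> (\<delta> k)\<^sup>2 / (2 * \<alpha>k k) + (\<Sum>\<^sub>\<infinity>i. s_\<phi> i a\<^sub>s (w i))"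
proof -
  define d where "d i = zk k i - z i" for i
  have d: "d \<in> l2" unfolding d_def by (rule l2_diff[OF zk_l2 z_l2])
  have sd: "(\<lambda>i. (d i)\<^sup>2 * (1 / (2 * \<alpha>k k))) summable_on UNIV"
    using l2_summable_on[OF d] by (rule summable_on_cmult_left)
  have sw: "(\<lambda>i. s_\<phi> i a\<^sub>s (w i)) summable_on UNIV" by (rule Rfun_Mk_plus_Phi(1)[OF a\<^sub>s_pos w_l2])
  have "s_\<phi> i (\<alpha>k k) (zk k i) \<le> (d i)\<^sup>2 * (1 / (2 * \<alpha>k k)) + s_\<phi> i a\<^sub>s (w i)" for i
    using prox_filter.s_P_le_of_value[OF prox_filter_coordinate[of i] \<alpha>k_pos[of k] s_source[of i], of "zk k i"]
    by (simp add: s_\<phi>_def d_def)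
  then have "(\<Sum>\<^sub>\<infinity>i. s_\<phi> i (\<alpha>k k) (zk k i)) \<le> (\<Sum>\<^sub>\<infinity>i. (d i)\<^sup>2 * (1 / (2 * \<alpha>k k)) + s_\<phi> i a\<^sub>s (w i))"
    by (intro infsum_mono Rfun_Mk_plus_Phi(1)[OF \<alpha>k_pos zk_l2] summable_on_add[OF sd sw])
  also have "\<dots> = l2sq d * (1 / (2 * \<alpha>k k)) + (\<Sum>\<^sub>\<infinity>i. s_\<phi> i a\<^sub>s (w i))"
    unfolding l2sq_def by (simp only: infsum_add[OF sd sw] infsum_cmult_left')
  also have "l2sq d \<le> (\<delta> k)\<^sup>2"
    unfolding l2sq_eq d_def using \<delta>_bound[of k] l2norm_nonneg by (intro power_mono) auto
  finally show ?thesis using \<alpha>k_pos[of k] by (simp add: divide_right_mono)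
qed

lemma filtered_tendsto: "(\<lambda>k. \<phi> (\<alpha>k k) (\<kappa> i) (zk k i)) \<longlonglongrightarrow> z i"
proof -
  have "filterlim \<alpha>k (at_right 0) sequentially"
    using \<alpha>k_tendsto \<alpha>k_pos by (intro tendsto_imp_filterlim_at_right) auto
  then have exact: "(\<lambda>k. \<phi> (\<alpha>k k) (\<kappa> i) (z i)) \<longlonglongrightarrow> z i"
    by (rule filterlim_compose[OF \<phi>_tendsto_id[OF \<kappa>_pos]])
  have "(\<lambda>k. \<phi> (\<alpha>k k) (\<kappa> i) (zk k i) - \<phi> (\<alpha>k k) (\<kappa> i) (z i)) \<longlonglongrightarrow> 0"
  proof -
    have le: "\<bar>\<phi> (\<alpha>k k) (\<kappa> i) (zk k i) - \<phi> (\<alpha>k k) (\<kappa> i) (z i)\<bar> \<le> \<bar>zk k i - z i\<bar>" for k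
      using \<phi>_shrinkage[OF \<alpha>k_pos \<kappa>_pos] unfolding shrinkage_def by blast
    have data: "(\<lambda>k. \<bar>zk k i - z i\<bar>) \<longlonglongrightarrow> 0"
      using l2norm_diff_tendsto_pointwise[OF zk_l2 z_l2 zk_conv] by (simp add: LIM_zero_iff tendsto_rabs_zero_iff)
    have "(\<lambda>k. \<bar>\<phi> (\<alpha>k k) (\<kappa> i) (zk k i) - \<phi> (\<alpha>k k) (\<kappa> i) (z i)\<bar>) \<longlonglongrightarrow> 0"
      by (rule tendsto_sandwich[of "\<lambda>_. 0" _ _ "\<lambda>k. \<bar>zk k i - z i\<bar>", OF _ _ tendsto_const data])
        (simp_all add: le)
    then show ?thesis by (simp add: tendsto_rabs_zero_iff)
  qed
  from tendsto_add[OF this exact] show ?thesis by simp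
qed

lemma convergence_Rfun:
  "(\<lambda>k. Rfun s \<kappa> (Mk_plus \<kappa> (Phi \<phi> (\<alpha>k k) \<kappa> (zk k)))) \<longlonglongrightarrow> Rfun s \<kappa> cplus"
  unfolding Rfun_Mk_plus_Phi(2)[OF \<alpha>k_pos zk_l2] Rfun_cplus
proof (rule tendsto_ereal, rule order_tendstoI)
  fix b assume "(\<Sum>\<^sub>\<infinity>i. s_\<phi> i a\<^sub>s (w i)) < b"
  moreover have "(\<lambda>k. (\<delta> k)\<^sup>2 / (2 * \<alpha>k k)) \<longlonglongrightarrow> 0"
    using tendsto_divide[OF \<delta>\<alpha>k_tendsto tendsto_const[of 2]] by (simp add: mult.commute)
  ultimately have "\<forall>\<^sub>F k in sequentially. (\<delta> k)\<^sup>2 / (2 * \<alpha>k k) < b - (\<Sum>\<^sub>\<infinity>i. s_\<phi> i a\<^sub>s (w i))"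
    by (intro order_tendstoD(2)) auto
  then show "\<forall>\<^sub>F k in sequentially. (\<Sum>\<^sub>\<infinity>i. s_\<phi> i (\<alpha>k k) (zk k i)) < b"
  proof eventually_elim
    case (elim k)
    then show ?case using Rfun_noisy_le[of k] by linarith
  qed
next
  fix b assume b: "b < (\<Sum>\<^sub>\<infinity>i. s_\<phi> i a\<^sub>s (w i))"
  show "\<forall>\<^sub>F k in sequentially. b < (\<Sum>\<^sub>\<infinity>i. s_\<phi> i (\<alpha>k k) (zk k i))"
  proof (rule eventually_gt_infsum[OF Rfun_Mk_plus_Phi(1)[OF \<alpha>k_pos zk_l2] s_\<phi>_nonneg[OF \<alpha>k_pos]
        Rfun_Mk_plus_Phi(1)[OF a\<^sub>s_pos w_l2] _ b])
    fix i and \<eta> :: real assume \<eta>: "\<eta> > 0"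
    have "s i (z i) \<le> liminf (\<lambda>k. s i (\<phi> (\<alpha>k k) (\<kappa> i) (zk k i)))"
      using s_lsc[of i] filtered_tendsto[of i] unfolding lsc_fun_def by blast
    then have "ereal (s_\<phi> i a\<^sub>s (w i)) \<le> liminf (\<lambda>k. ereal (s_\<phi> i (\<alpha>k k) (zk k i)))"
      using s_source[of i] s_\<phi>_eq[OF \<alpha>k_pos] by simp
    moreover have "ereal (s_\<phi> i a\<^sub>s (w i) - \<eta>) < ereal (s_\<phi> i a\<^sub>s (w i))" using \<eta> by simp
    ultimately have "\<forall>\<^sub>F k in sequentially. ereal (s_\<phi> i a\<^sub>s (w i) - \<eta>) < ereal (s_\<phi> i (\<alpha>k k) (zk k i))"
      unfolding le_Liminf_iff by blast
    then show "\<forall>\<^sub>F k in sequentially. s_\<phi> i a\<^sub>s (w i) - \<eta> < s_\<phi> i (\<alpha>k k) (zk k i)" by simp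
  qed
qed

lemma convergence_weak_conv: "weak_conv_l2 (\<lambda>k. Mk_plus \<kappa> (Phi \<phi> (\<alpha>k k) \<kappa> (zk k))) cplus"
proof -
  obtain D c :: real where D: "D > 0" and c: "c > 0"
    and bound: "\<And>a w. a > 0 \<Longrightarrow> w \<in> l2 \<Longrightarrow>
      l2sq (Mk_plus \<kappa> (Phi \<phi> a \<kappa> w)) \<le> (\<Sum>\<^sub>\<infinity>i. s_\<phi> i a (w i)) / D + ((\<Sum>\<^sub>\<infinity>i. s_\<phi> i a (w i)) / (D * c))\<^sup>2"
    using l2sq_le_Rfun by blast
  have "Bseq (\<lambda>k. (\<delta> k)\<^sup>2 / \<alpha>k k)" by (rule convergent_imp_Bseq[OF convergentI[OF \<delta>\<alpha>k_tendsto]])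
  then obtain K where K_norm: "\<forall>k. norm ((\<delta> k)\<^sup>2 / \<alpha>k k) \<le> K" by (auto elim: BseqE)
  have K: "(\<delta> k)\<^sup>2 / \<alpha>k k \<le> K" for k using K_norm[rule_format, of k] \<alpha>k_pos[of k] by simp
  define B where "B = K / 2 + (\<Sum>\<^sub>\<infinity>i. s_\<phi> i a\<^sub>s (w i))"
  have S_le: "(\<Sum>\<^sub>\<infinity>i. s_\<phi> i (\<alpha>k k) (zk k i)) \<le> B" for k
    using Rfun_noisy_le[of k] K[of k] by (simp add: B_def)
  have S_nonneg: "0 \<le> (\<Sum>\<^sub>\<infinity>i. s_\<phi> i (\<alpha>k k) (zk k i))" for k
    by (intro infsum_nonneg s_\<phi>_nonneg[OF \<alpha>k_pos])
  show ?thesis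
  proof (rule weak_conv_l2I[OF Mk_plus_Phi_in_l2[OF \<alpha>k_pos zk_l2] cplus_l2])
    show "l2sq (Mk_plus \<kappa> (Phi \<phi> (\<alpha>k k) \<kappa> (zk k))) \<le> B / D + (B / (D * c))\<^sup>2" for k
    proof -
      have "(\<Sum>\<^sub>\<infinity>i. s_\<phi> i (\<alpha>k k) (zk k i)) / D \<le> B / D"
        using S_le[of k] D by (intro divide_right_mono) auto
      moreover have "((\<Sum>\<^sub>\<infinity>i. s_\<phi> i (\<alpha>k k) (zk k i)) / (D * c))\<^sup>2 \<le> (B / (D * c))\<^sup>2"
        using S_le[of k] S_nonneg[of k] D c by (intro power_mono divide_right_mono) auto
      ultimately show ?thesis using bound[OF \<alpha>k_pos[of k] zk_l2[of k]] by linarith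
    qed
    show "(\<lambda>k. Mk_plus \<kappa> (Phi \<phi> (\<alpha>k k) \<kappa> (zk k)) i) \<longlonglongrightarrow> cplus i" for i
      using tendsto_divide[OF filtered_tendsto[of i] tendsto_const, of "\<kappa> i"] \<kappa>_pos[of i] z_eq
      by (simp add: Mk_plus_def Phi_def Mk_def)
  qed
qed

end

end

end

theorem proposition4p3:
  fixes \<phi> :: "real \<Rightarrow> real \<Rightarrow> real \<Rightarrow> real"
    and \<kappa> :: "'i::countable \<Rightarrow> real"
    and s :: "'i \<Rightarrow> real \<Rightarrow> ereal"
    and \<alpha> :: real and z :: "'i \<Rightarrow> real" and zk :: "nat \<Rightarrow> 'i \<Rightarrow> real"
  assumes filt: "nonlin_reg_filter \<phi>"
    and A: "assumptionA \<phi>"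
    and kpos: "\<And>i. \<kappa> i > 0"
    and kbdd: "bdd_above (range \<kappa>)"
    and s_proper: "\<And>i. proper_fun (s i)"
    and s_convex: "\<And>i. convex_fun (s i)"
    and s_lsc: "\<And>i. lsc_fun (s i)"
    and s0: "\<And>i. s i 0 = 0"
    and s_prox: "\<And>i a. a > 0 \<Longrightarrow> \<phi> a (\<kappa> i) = prox (\<lambda>y. ereal a * s i y)"
    and apos: "\<alpha> > 0"
    and zl2: "z \<in> l2"
    and zkl2: "\<And>k. zk k \<in> l2"
    and zk_conv: "(\<lambda>k. l2norm (\<lambda>i. zk k i - z i)) \<longlonglongrightarrow> 0"
  shows
    "dom_MPhi \<phi> \<alpha> \<kappa> = l2
     \<and> (weak_conv_l2 (\<lambda>k. Mk_plus \<kappa> (Phi \<phi> \<alpha> \<kappa> (zk k))) (Mk_plus \<kappa> (Phi \<phi> \<alpha> \<kappa> z))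
        \<and> (\<lambda>k. Rfun s \<kappa> (Mk_plus \<kappa> (Phi \<phi> \<alpha> \<kappa> (zk k))))
            \<longlonglongrightarrow> Rfun s \<kappa> (Mk_plus \<kappa> (Phi \<phi> \<alpha> \<kappa> z)))
     \<and> (\<forall>cplus \<delta> \<alpha>k. cplus \<in> l2 \<and> z = Mk \<kappa> cplus
          \<and> (\<exists>\<alpha>t>0. \<exists>w\<in>l2. Phi \<phi> \<alpha>t \<kappa> w = z)
          \<and> \<delta> \<longlonglongrightarrow> 0 \<and> (\<forall>k. l2norm (\<lambda>i. zk k i - z i) \<le> \<delta> k)
          \<and> (\<forall>k. \<alpha>k k > 0) \<and> \<alpha>k \<longlonglongrightarrow> 0
          \<and> (\<lambda>k. (\<delta> k)\<^sup>2 / \<alpha>k k) \<longlonglongrightarrow> 0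
        \<longrightarrow> weak_conv_l2 (\<lambda>k. Mk_plus \<kappa> (Phi \<phi> (\<alpha>k k) \<kappa> (zk k))) cplus
          \<and> (\<lambda>k. Rfun s \<kappa> (Mk_plus \<kappa> (Phi \<phi> (\<alpha>k k) \<kappa> (zk k)))) \<longlonglongrightarrow> Rfun s \<kappa> cplus)"
proof -
  interpret filtered_regularization \<phi> \<kappa> s
    using filt A kpos kbdd s_proper s_convex s_lsc s0 s_prox by unfold_locales
  have convergence:
    "weak_conv_l2 (\<lambda>k. Mk_plus \<kappa> (Phi \<phi> (\<alpha>k k) \<kappa> (zk k))) cplus
      \<and> (\<lambda>k. Rfun s \<kappa> (Mk_plus \<kappa> (Phi \<phi> (\<alpha>k k) \<kappa> (zk k)))) \<longlonglongrightarrow> Rfun s \<kappa> cplus"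
    if H: "cplus \<in> l2" "z = Mk \<kappa> cplus" "\<exists>\<alpha>t>0. \<exists>w\<in>l2. Phi \<phi> \<alpha>t \<kappa> w = z"
      "\<forall>k. l2norm (\<lambda>i. zk k i - z i) \<le> \<delta> k" "\<forall>k. \<alpha>k k > 0" "\<alpha>k \<longlonglongrightarrow> 0"
      "(\<lambda>k. (\<delta> k)\<^sup>2 / \<alpha>k k) \<longlonglongrightarrow> 0"
    for cplus \<delta> \<alpha>k
  proof -
    obtain \<alpha>t w where "\<alpha>t > 0" "w \<in> l2" "Phi \<phi> \<alpha>t \<kappa> w = z" using H(3) by blast
    with H zl2 zkl2 zk_conv show ?thesis
      using convergence_weak_conv convergence_Rfun by blast
  qed
  show ?thesis
    using dom_MPhi_eq_l2[OF apos] stability_weak_conv[OF zl2 zkl2 zk_conv apos]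
      stability_Rfun[OF zl2 zkl2 zk_conv apos] convergence by blast
qed

end
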